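(* For any injective homomorphism of Thompson's group $F$ into a totally disconnected locally compact group $H$, the image of $F$ intersects every compact open subgroup of $H$ trivially. In particular, if $F$ acts faithfully on a connected locally finite graph, then the action on the set of vertices is free.
   Context: Thompson's group $F$ is the group of orientation-preserving homeomorphisms of $[0,1]$ that are piecewise linear with finitely many breakpoints, all at dyadic rationals, and all slopes integer powers of $2$. *)

theory Defs
  imports "HOL-Analysis.Analysis" "HOL-Algebra.Group_Action"
begin

definition dyadic :: "real \<Rightarrow> bool" where
  "dyadic x \<longleftrightarrow> (\<exists>(m::int) (k::nat). x = real_of_int m / 2 ^ k)"

definition thompson_F_set :: "(real \<Rightarrow> real) set" where
  "thompson_F_set = {f.
     (\<forall>x. x \<notin> {0..1} \<longrightarrow> f x = x) \<and>
     continuous_on {0..1} f \<and> strict_mono_on {0..1} f \<and> f ` {0..1} = {0..1} \<and>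
     (\<exists>bs::real list. length bs \<ge> 2 \<and> sorted_wrt (<) bs \<and> hd bs = 0 \<and> last bs = 1 \<and>
        (\<forall>b\<in>set bs. dyadic b) \<and>
        (\<forall>i. Suc i < length bs \<longrightarrow>
           (\<exists>k::int. \<forall>x\<in>{bs ! i .. bs ! Suc i}. f x = f (bs ! i) + 2 powi k * (x - bs ! i))))}"

definition Thompson_F :: "(real \<Rightarrow> real) monoid" where
  "Thompson_F = \<lparr>carrier = thompson_F_set, mult = (\<circ>), one = id\<rparr>"

definition totally_disconnected_space :: "'a topology \<Rightarrow> bool" where
  "totally_disconnected_space T \<longleftrightarrow>
     (\<forall>S. connectedin T S \<longrightarrow> (\<exists>a. S \<subseteq> {a}))"

definition tdlc_group :: "('a, 'b) monoid_scheme \<Rightarrow> 'a topology \<Rightarrow> bool" where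
  "tdlc_group G T \<longleftrightarrow> group G \<and> topspace T = carrier G \<and>
     continuous_map (prod_topology T T) T (\<lambda>(x, y). x \<otimes>\<^bsub>G\<^esub> y) \<and>
     continuous_map T T (\<lambda>x. inv\<^bsub>G\<^esub> x) \<and>
     Hausdorff_space T \<and> locally_compact_space T \<and> totally_disconnected_space T"

definition compact_open_subgroup :: "'a set \<Rightarrow> ('a, 'b) monoid_scheme \<Rightarrow> 'a topology \<Rightarrow> bool" where
  "compact_open_subgroup K G T \<longleftrightarrow> subgroup K G \<and> openin T K \<and> compactin T K"

definition graph_reachable :: "'v set \<Rightarrow> ('v \<Rightarrow> 'v \<Rightarrow> bool) \<Rightarrow> 'v \<Rightarrow> 'v \<Rightarrow> bool" where
  "graph_reachable V Ed u w \<longleftrightarrow>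
     (\<exists>p. p \<noteq> [] \<and> hd p = u \<and> last p = w \<and> set p \<subseteq> V \<and>
          (\<forall>i. Suc i < length p \<longrightarrow> Ed (p ! i) (p ! Suc i)))"

definition connected_locfin_graph :: "'v set \<Rightarrow> ('v \<Rightarrow> 'v \<Rightarrow> bool) \<Rightarrow> bool" where
  "connected_locfin_graph V Ed \<longleftrightarrow>
     V \<noteq> {} \<and>
     (\<forall>u w. Ed u w \<longrightarrow> u \<in> V \<and> w \<in> V) \<and>
     (\<forall>u w. Ed u w \<longrightarrow> Ed w u) \<and> (\<forall>u. \<not> Ed u u) \<and>
     (\<forall>u\<in>V. finite {w. Ed u w}) \<and>
     (\<forall>u\<in>V. \<forall>w\<in>V. graph_reachable V Ed u w)"

definition graph_action :: "('g, 'c) monoid_scheme \<Rightarrow> 'v set \<Rightarrow> ('v \<Rightarrow> 'v \<Rightarrow> bool) \<Rightarrow> ('g \<Rightarrow> 'v \<Rightarrow> 'v) \<Rightarrow> bool" where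
  "graph_action G V Ed \<phi> \<longleftrightarrow> group_action G V \<phi> \<and>
     (\<forall>g\<in>carrier G. \<forall>u\<in>V. \<forall>w\<in>V. Ed u w \<longleftrightarrow> Ed (\<phi> g u) (\<phi> g w))"

end

theory Submission
  imports Defs
begin

text \<open>
  Let \<open>h \<noteq> 1\<close> in \<open>F\<close>. Replacing \<open>h\<close> by \<open>h\<^sup>-\<^sup>1\<close> if necessary, some point \<open>p\<close> satisfies
  \<open>p < h p\<close>, so a small dyadic interval \<open>S\<close> just above \<open>p\<close> is moved off itself by every positive power
  \<open>b = h\<^sup>N\<close>. Take non-commuting \<open>x\<^sub>1, x\<^sub>2 \<in> F\<close> supported in \<open>S\<close> and \<open>x\<^sub>3 = (x\<^sub>2 x\<^sub>1)\<^sup>-\<^sup>1\<close>. Elements supported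
  in \<open>b S\<close> commute with those supported in \<open>S\<close>, which gives
  \<open>[x\<^sub>1, x\<^sub>2] = [x\<^sub>1, b] [x\<^sub>2, b] [x\<^sub>3, b]\<close>. Consequently every subgroup containing a positive power of
  each conjugate of \<open>h\<close> contains the nontrivial element \<open>[x\<^sub>1, x\<^sub>2]\<close>.

  In a totally disconnected locally compact group, an element of a compact open subgroup has a
  positive power in every open subgroup (finitely many cosets cover the compact group), and
  every nontrivial element is avoided by some open subgroup. For a faithful action on a connected
  locally finite graph, vertex stabilisers play the role of the open subgroups: an element fixing a
  vertex permutes each finite ball around it, so some positive power fixes any given vertex.
\<close>

subsection \<open>Dyadic rationals\<close>

lemma dyadic_of_int [simp]: "dyadic (real_of_int m)"
  unfolding dyadic_def by (rule exI[of _ m], rule exI[of _ 0]) simp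

lemma dyadic_0 [simp]: "dyadic 0" and dyadic_1 [simp]: "dyadic 1"
  using dyadic_of_int[of 0] dyadic_of_int[of 1] by simp_all

lemma dyadic_add: assumes "dyadic x" "dyadic y" shows "dyadic (x + y)"
proof -
  obtain m1 k1 m2 k2 where x: "x = real_of_int m1 / 2 ^ k1" and y: "y = real_of_int m2 / 2 ^ k2"
    using assms unfolding dyadic_def by blast
  have "x + y = real_of_int (m1 * 2 ^ k2 + m2 * 2 ^ k1) / 2 ^ (k1 + k2)"
    unfolding x y by (simp add: field_simps power_add)
  then show ?thesis unfolding dyadic_def by blast
qed

lemma dyadic_uminus: assumes "dyadic x" shows "dyadic (- x)"
proof -
  obtain m k where "x = real_of_int m / 2 ^ k" using assms unfolding dyadic_def by blast
  then have "- x = real_of_int (- m) / 2 ^ k" by simp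
  then show ?thesis unfolding dyadic_def by blast
qed

lemma dyadic_diff: "dyadic x \<Longrightarrow> dyadic y \<Longrightarrow> dyadic (x - y)"
  using dyadic_add[of x "- y"] dyadic_uminus[of y] by simp

lemma dyadic_powi_mult: assumes "dyadic x" shows "dyadic (2 powi k * x)"
proof -
  obtain m j where x: "x = real_of_int m / 2 ^ j" using assms unfolding dyadic_def by blast
  show ?thesis
  proof (cases "k \<ge> 0")
    case True
    then have "2 powi k * x = real_of_int (m * 2 ^ nat k) / 2 ^ j"
      unfolding x by (simp add: power_int_def)
    then show ?thesis unfolding dyadic_def by blast
  next
    case False
    then have "2 powi k * x = real_of_int m / 2 ^ (j + nat (- k))"
      unfolding x by (simp add: power_int_def power_add field_simps)
    then show ?thesis unfolding dyadic_def by blast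
  qed
qed

lemma dyadic_divide_2: "dyadic x \<Longrightarrow> dyadic (x / 2)"
  using dyadic_powi_mult[of x "-1"] by (simp add: power_int_minus)

lemma dyadic_inverse_pow2: "dyadic (1 / 2 ^ n)"
  unfolding dyadic_def by (rule exI[of _ 1], rule exI[of _ n]) simp

subsection \<open>Homeomorphisms of the unit interval\<close>

definition homeo01 :: "(real \<Rightarrow> real) \<Rightarrow> bool" where
  "homeo01 f \<longleftrightarrow> (\<forall>x. x \<notin> {0..1} \<longrightarrow> f x = x) \<and>
     continuous_on {0..1} f \<and> strict_mono_on {0..1} f \<and> f ` {0..1} = {0..1}"

lemma homeo01_fixes_outside: "homeo01 f \<Longrightarrow> x \<notin> {0..1} \<Longrightarrow> f x = x"
  unfolding homeo01_def by blast

lemma homeo01_maps_unit_interval: "homeo01 f \<Longrightarrow> x \<in> {0..1} \<Longrightarrow> f x \<in> {0..1}"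
  unfolding homeo01_def by blast

lemma homeo01_strict_mono:
  assumes f: "homeo01 f" shows "strict_mono f"
proof (rule strict_monoI)
  fix x y :: real assume "x < y"
  have sm: "strict_mono_on {0..1} f" using f unfolding homeo01_def by blast
  consider "x \<in> {0..1}" "y \<in> {0..1}" | "x \<notin> {0..1}" | "y \<notin> {0..1}" by blast
  then show "f x < f y"
  proof cases
    case 1 then show ?thesis using sm \<open>x < y\<close> unfolding strict_mono_on_def by blast
  next
    case 2 then show ?thesis
      using \<open>x < y\<close> homeo01_fixes_outside[OF f] homeo01_maps_unit_interval[OF f, of y]
      by (cases "y \<in> {0..1}") auto
  next
    case 3 then show ?thesis
      using \<open>x < y\<close> homeo01_fixes_outside[OF f] homeo01_maps_unit_interval[OF f, of x]
      by (cases "x \<in> {0..1}") auto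
  qed
qed

lemma homeo01_less_iff: "homeo01 f \<Longrightarrow> f x < f y \<longleftrightarrow> x < y"
  using homeo01_strict_mono strict_mono_less by blast

lemma homeo01_le_iff: "homeo01 f \<Longrightarrow> f x \<le> f y \<longleftrightarrow> x \<le> y"
  using homeo01_strict_mono strict_mono_less_eq by blast

lemma homeo01_inj: "homeo01 f \<Longrightarrow> inj f"
  using homeo01_strict_mono strict_mono_imp_inj_on by blast

lemma homeo01_surj: assumes "homeo01 f" shows "surj f"
proof -
  have "y \<in> range f" for y
    using assms unfolding homeo01_def by (cases "y \<in> {0..1}") (blast, metis rangeI)
  then show ?thesis by auto
qed

lemma homeo01_bij: "homeo01 f \<Longrightarrow> bij f"
  by (simp add: bij_def homeo01_inj homeo01_surj)

lemma homeo01_0: assumes f: "homeo01 f" shows "f 0 = 0"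
proof -
  obtain y where "y \<in> {0..1}" "f y = 0"
    using f unfolding homeo01_def by (metis atLeastAtMost_iff imageE order_refl zero_le_one)
  then show ?thesis
    using homeo01_le_iff[OF f, of 0 y] homeo01_maps_unit_interval[OF f, of 0] by auto
qed

lemma homeo01_1: assumes f: "homeo01 f" shows "f 1 = 1"
proof -
  obtain y where "y \<in> {0..1}" "f y = 1"
    using f unfolding homeo01_def by (metis atLeastAtMost_iff imageE order_refl zero_le_one)
  then show ?thesis
    using homeo01_le_iff[OF f, of y 1] homeo01_maps_unit_interval[OF f, of 1] by auto
qed

lemma homeo01_id: "homeo01 id"
  unfolding homeo01_def by (auto simp: strict_mono_on_def)

lemma homeo01_comp: assumes f: "homeo01 f" and g: "homeo01 g" shows "homeo01 (f \<circ> g)"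
proof -
  have gi: "g ` {0..1} = {0..1}" and fi: "f ` {0..1} = {0..1}" using f g by (auto simp: homeo01_def)
  have "continuous_on {0..1} (f \<circ> g)"
    using f g gi by (intro continuous_on_compose) (auto simp: homeo01_def)
  moreover have "strict_mono_on {0..1} (f \<circ> g)"
    using homeo01_less_iff[OF f] homeo01_less_iff[OF g] by (simp add: strict_mono_on_def)
  moreover have "(f \<circ> g) ` {0..1} = {0..1}" unfolding image_comp[symmetric] using fi gi by simp
  ultimately show ?thesis unfolding homeo01_def using f g by (simp add: homeo01_def)
qed

lemma homeo01_inv: assumes f: "homeo01 f" shows "homeo01 (inv_into UNIV f)"
proof -
  have bij: "bij f" using homeo01_bij[OF f] .
  have fi: "\<And>y. f (inv_into UNIV f y) = y" using bij by (simp add: bij_is_surj surj_f_inv_f)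
  have if_: "\<And>x. inv_into UNIV f (f x) = x" using bij by (simp add: bij_is_inj)
  have fin: "x \<in> {0..1} \<longleftrightarrow> f x \<in> {0..1}" for x
    using homeo01_fixes_outside[OF f, of x] homeo01_maps_unit_interval[OF f, of x]
    by (cases "x \<in> {0..1}") auto
  have "inv_into UNIV f ` {0..1} = {0..1}"
  proof (intro equalityI subsetI)
    fix x :: real assume "x \<in> {0..1}"
    then show "x \<in> inv_into UNIV f ` {0..1}" using fin if_ by (metis image_eqI)
  next
    fix x assume "x \<in> inv_into UNIV f ` {0..1}"
    then show "x \<in> {0..1}" using fin fi by (metis imageE)
  qed
  moreover have "continuous_on {0..1} (inv_into UNIV f)"
    using continuous_on_inv[of "{0..1}" f] f if_ by (auto simp: homeo01_def)
  moreover have "strict_mono_on {0..1} (inv_into UNIV f)"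
    by (rule strict_mono_onI) (metis fi homeo01_less_iff[OF f])
  moreover have "\<forall>y. y \<notin> {0..1} \<longrightarrow> inv_into UNIV f y = y"
    by (metis if_ homeo01_fixes_outside[OF f])
  ultimately show ?thesis unfolding homeo01_def by blast
qed

subsection \<open>Dyadic piecewise linear homeomorphisms\<close>

definition pow2_affine_pieces :: "real set \<Rightarrow> (real \<Rightarrow> real) \<Rightarrow> bool" where
  "pow2_affine_pieces B f \<longleftrightarrow> (\<forall>x y. 0 \<le> x \<and> x < y \<and> y \<le> 1 \<and> (\<forall>b\<in>B. b \<le> x \<or> y \<le> b) \<longrightarrow>
      (\<exists>k::int. \<forall>z\<in>{x..y}. f z = f x + 2 powi k * (z - x)))"

text \<open>A breakpoint-set form of \<open>thompson_F_set\<close> (see \<open>thompson_F_set_iff_dyadic_pl\<close>),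
  which is easier to compose and invert than the sorted-list form.\<close>

definition dyadic_pl :: "(real \<Rightarrow> real) \<Rightarrow> bool" where
  "dyadic_pl f \<longleftrightarrow> homeo01 f \<and> (\<exists>B. finite B \<and> B \<subseteq> {0..1} \<and> 0 \<in> B \<and> 1 \<in> B \<and>
      (\<forall>b\<in>B. dyadic b \<and> dyadic (f b)) \<and> pow2_affine_pieces B f)"

lemma sorted_hd_le_le_last:
  assumes "sorted xs" "x \<in> set xs" shows "hd xs \<le> x" "x \<le> last xs"
  using assms by (induction xs rule: rev_induct) (auto simp: sorted_append hd_append)

lemma sorted_wrt_less_no_element_between:
  fixes bs :: "'a::linorder list"
  assumes sw: "sorted_wrt (<) bs" and i: "Suc i < length bs" and b: "b \<in> set bs"
  shows "b \<le> bs ! i \<or> bs ! Suc i \<le> b"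
proof -
  obtain j where j: "j < length bs" "bs ! j = b" using b by (auto simp: in_set_conv_nth)
  show ?thesis
  proof (cases "j \<le> i")
    case True then show ?thesis using sorted_wrt_nth_less[OF sw, of j i] j i
      by (cases "j = i") auto
  next
    case False then show ?thesis using sorted_wrt_nth_less[OF sw, of "Suc i" j] j i
      by (cases "j = Suc i") auto
  qed
qed

lemma sorted_wrt_less_segment_containing:
  fixes bs :: "'a::linorder list"
  assumes sw: "sorted_wrt (<) bs" and ne: "bs \<noteq> []"
    and xy: "hd bs \<le> x" "x < y" "y \<le> last bs" and gap: "\<forall>b\<in>set bs. b \<le> x \<or> y \<le> b"
  obtains i where "Suc i < length bs" "bs ! i \<le> x" "y \<le> bs ! Suc i"
proof -
  define I where "I = {i. i < length bs \<and> bs ! i \<le> x}"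
  have "0 \<in> I" unfolding I_def using ne xy by (simp add: hd_conv_nth)
  moreover have fI: "finite I" unfolding I_def by auto
  ultimately have iI: "Max I \<in> I" using Max_in by blast
  have si: "Suc (Max I) < length bs"
  proof (rule ccontr)
    assume "\<not> Suc (Max I) < length bs"
    then have "Max I = length bs - 1" using iI unfolding I_def by auto
    then show False using iI ne xy unfolding I_def by (simp add: last_conv_nth)
  qed
  have "\<not> bs ! Suc (Max I) \<le> x"
  proof
    assume "bs ! Suc (Max I) \<le> x"
    then have "Suc (Max I) \<in> I" using si by (simp add: I_def)
    then show False using Max_ge[OF fI] by fastforce
  qed
  then have "y \<le> bs ! Suc (Max I)" using gap si by (meson nth_mem)
  then show ?thesis using that si iI unfolding I_def by blast
qed

lemma affine_on_subinterval:
  fixes f :: "real \<Rightarrow> real"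
  assumes "\<forall>z\<in>{a..b}. f z = f a + c * (z - a)" "a \<le> x" "y \<le> b"
  shows "\<forall>z\<in>{x..y}. f z = f x + c * (z - x)"
proof
  fix z assume "z \<in> {x..y}"
  then have "z \<in> {a..b}" "x \<in> {a..b}" using assms(2,3) by auto
  then have "f z = f a + c * (z - a)" "f x = f a + c * (x - a)" using assms(1) by blast+
  then show "f z = f x + c * (z - x)" by (simp add: algebra_simps)
qed

lemma thompson_F_set_iff: "f \<in> thompson_F_set \<longleftrightarrow> homeo01 f \<and>
     (\<exists>bs::real list. length bs \<ge> 2 \<and> sorted_wrt (<) bs \<and> hd bs = 0 \<and> last bs = 1 \<and>
        (\<forall>b\<in>set bs. dyadic b) \<and>
        (\<forall>i. Suc i < length bs \<longrightarrow>
           (\<exists>k::int. \<forall>x\<in>{bs ! i .. bs ! Suc i}. f x = f (bs ! i) + 2 powi k * (x - bs ! i))))"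
  unfolding thompson_F_set_def homeo01_def by blast

lemma dyadic_values_at_breakpoints:
  assumes f0: "f 0 = 0" and sw: "sorted_wrt (<) bs" and ne: "bs \<noteq> []" and hd: "hd bs = 0"
    and dy: "\<forall>b\<in>set bs. dyadic b"
    and seg: "\<forall>i. Suc i < length bs \<longrightarrow>
           (\<exists>k::int. \<forall>x\<in>{bs ! i .. bs ! Suc i}. f x = f (bs ! i) + 2 powi k * (x - bs ! i))"
  shows "i < length bs \<Longrightarrow> dyadic (f (bs ! i))"
proof (induction i)
  case 0 then show ?case using ne hd f0 by (simp add: hd_conv_nth)
next
  case (Suc i)
  then obtain k where k: "\<forall>x\<in>{bs ! i .. bs ! Suc i}. f x = f (bs ! i) + 2 powi k * (x - bs ! i)"
    using seg by blast
  have "bs ! i < bs ! Suc i" using sorted_wrt_nth_less[OF sw, of i "Suc i"] Suc.prems by simp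
  then have "bs ! Suc i \<in> {bs ! i .. bs ! Suc i}" by simp
  then have "f (bs ! Suc i) = f (bs ! i) + 2 powi k * (bs ! Suc i - bs ! i)"
    using k by blast
  moreover have "dyadic (bs ! Suc i)" "dyadic (bs ! i)" "dyadic (f (bs ! i))"
    using dy Suc by auto
  ultimately show ?case by (simp add: dyadic_add dyadic_diff dyadic_powi_mult)
qed

lemma pow2_affine_pieces_of_breakpoint_list:
  assumes sw: "sorted_wrt (<) bs" and ne: "bs \<noteq> []" and hd: "hd bs = 0" and la: "last bs = 1"
    and seg: "\<forall>i. Suc i < length bs \<longrightarrow>
           (\<exists>k::int. \<forall>x\<in>{bs ! i .. bs ! Suc i}. f x = f (bs ! i) + 2 powi k * (x - bs ! i))"
  shows "pow2_affine_pieces (set bs) f"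
  unfolding pow2_affine_pieces_def
proof (intro allI impI)
  fix x y assume xy: "0 \<le> x \<and> x < y \<and> y \<le> 1 \<and> (\<forall>b\<in>set bs. b \<le> x \<or> y \<le> b)"
  obtain i where i: "Suc i < length bs" "bs ! i \<le> x" "y \<le> bs ! Suc i"
    by (rule sorted_wrt_less_segment_containing[OF sw ne, of x y]) (use hd la xy in auto)
  obtain k where k: "\<forall>z\<in>{bs ! i .. bs ! Suc i}. f z = f (bs ! i) + 2 powi k * (z - bs ! i)"
    using seg i(1) by blast
  show "\<exists>k::int. \<forall>z\<in>{x..y}. f z = f x + 2 powi k * (z - x)"
    using affine_on_subinterval[OF k i(2,3)] by blast
qed

lemma dyadic_pl_of_breakpoint_list:
  assumes h: "homeo01 f" and len: "length bs \<ge> 2" and sw: "sorted_wrt (<) bs"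
    and hd: "hd bs = 0" and la: "last bs = 1" and dy: "\<forall>b\<in>set bs. dyadic b"
    and seg: "\<forall>i. Suc i < length bs \<longrightarrow>
           (\<exists>k::int. \<forall>x\<in>{bs ! i .. bs ! Suc i}. f x = f (bs ! i) + 2 powi k * (x - bs ! i))"
  shows "dyadic_pl f"
proof -
  have ne: "bs \<noteq> []" using len by auto
  have "set bs \<subseteq> {0..1}"
  proof
    fix b assume "b \<in> set bs"
    then show "b \<in> {0..1}"
      using sorted_hd_le_le_last[OF strict_sorted_imp_sorted[OF sw]] hd la by simp
  qed
  moreover have "\<forall>b\<in>set bs. dyadic b \<and> dyadic (f b)"
  proof
    fix b assume "b \<in> set bs"
    then obtain i where "i < length bs" "b = bs ! i" by (auto simp: in_set_conv_nth)
    then show "dyadic b \<and> dyadic (f b)"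
      using dy dyadic_values_at_breakpoints[OF homeo01_0[OF h] sw ne hd dy seg] by auto
  qed
  moreover have "0 \<in> set bs" "1 \<in> set bs" using hd_in_set[OF ne] last_in_set[OF ne] hd la by simp_all
  ultimately show ?thesis unfolding dyadic_pl_def
    using h pow2_affine_pieces_of_breakpoint_list[OF sw ne hd la seg] by blast
qed

lemma breakpoint_list_of_dyadic_pl:
  assumes "dyadic_pl f"
  obtains bs where "length bs \<ge> 2" "sorted_wrt (<) bs" "hd bs = 0" "last bs = 1"
    "\<forall>b\<in>set bs. dyadic b"
    "\<forall>i. Suc i < length bs \<longrightarrow>
       (\<exists>k::int. \<forall>x\<in>{bs ! i .. bs ! Suc i}. f x = f (bs ! i) + 2 powi k * (x - bs ! i))"
proof -
  obtain B where fB: "finite B" and B01: "B \<subseteq> {0..1}" and B0: "0 \<in> B" and B1: "1 \<in> B"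
    and dyB: "\<forall>b\<in>B. dyadic b" and aff: "pow2_affine_pieces B f"
    using assms unfolding dyadic_pl_def by blast
  define bs where "bs = sorted_list_of_set B"
  have sb: "set bs = B" and sw: "sorted_wrt (<) bs" unfolding bs_def using fB by simp_all
  have "card {0::real, 1} \<le> card B" using fB B0 B1 by (intro card_mono) auto
  then have len: "length bs \<ge> 2" unfolding bs_def by simp
  then have ne: "bs \<noteq> []" by auto
  note bounds = sorted_hd_le_le_last[OF strict_sorted_imp_sorted[OF sw]]
  have "hd bs \<in> {0..1}" "last bs \<in> {0..1}" using hd_in_set[OF ne] last_in_set[OF ne] sb B01 by auto
  then have hd: "hd bs = 0" and la: "last bs = 1" using bounds(1)[of 0] bounds(2)[of 1] B0 B1 sb by auto
  have "\<exists>k::int. \<forall>x\<in>{bs ! i .. bs ! Suc i}. f x = f (bs ! i) + 2 powi k * (x - bs ! i)"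
    if i: "Suc i < length bs" for i
  proof -
    have "bs ! i < bs ! Suc i" using sorted_wrt_nth_less[OF sw, of i "Suc i"] i by simp
    moreover have "bs ! i \<in> B" "bs ! Suc i \<in> B" using sb i by auto
    then have "0 \<le> bs ! i" "bs ! Suc i \<le> 1" using B01 by auto
    moreover have "\<forall>b\<in>B. b \<le> bs ! i \<or> bs ! Suc i \<le> b"
      using sorted_wrt_less_no_element_between[OF sw i] sb by blast
    ultimately show ?thesis using aff unfolding pow2_affine_pieces_def by blast
  qed
  then show ?thesis using that len sw hd la dyB sb by blast
qed

lemma thompson_F_set_iff_dyadic_pl: "f \<in> thompson_F_set \<longleftrightarrow> dyadic_pl f"
proof
  assume "f \<in> thompson_F_set"
  then show "dyadic_pl f" using dyadic_pl_of_breakpoint_list unfolding thompson_F_set_iff by blast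
next
  assume f: "dyadic_pl f"
  then have "homeo01 f" by (simp add: dyadic_pl_def)
  with breakpoint_list_of_dyadic_pl[OF f] show "f \<in> thompson_F_set"
    unfolding thompson_F_set_iff by metis
qed

lemma pow2_affine_pieces_at:
  assumes fB: "finite B" and B0: "0 \<in> B" and B01: "B \<subseteq> {0..1}"
    and aff: "pow2_affine_pieces B f" and x: "x \<in> {0..1}"
  obtains a k where "a \<in> B" "f x = f a + 2 powi k * (x - a)"
proof -
  define a where "a = Max {b\<in>B. b \<le> x}"
  have fin: "finite {b\<in>B. b \<le> x}" using fB by auto
  have aB: "a \<in> B" "a \<le> x" using Max_in[OF fin] B0 x unfolding a_def by auto
  show ?thesis
  proof (cases "a = x")
    case True then show ?thesis using that[of a 0] aB by simp
  next
    case False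
    have "b \<le> a \<or> x \<le> b" if "b \<in> B" for b
      using Max_ge[OF fin, of b] that unfolding a_def by (cases "b \<le> x") auto
    moreover have "0 \<le> a" "a < x" "x \<le> 1" using aB B01 False x by auto
    ultimately obtain k where "\<forall>z\<in>{a..x}. f z = f a + 2 powi k * (z - a)"
      using aff unfolding pow2_affine_pieces_def by blast
    moreover have "x \<in> {a..x}" using aB by simp
    ultimately show ?thesis using that aB by blast
  qed
qed

lemma dyadic_pl_dyadic_iff:
  assumes "dyadic_pl f" "x \<in> {0..1}" shows "dyadic (f x) \<longleftrightarrow> dyadic x"
proof -
  obtain B where fB: "finite B" and B01: "B \<subseteq> {0..1}" and B0: "0 \<in> B"
    and dyB: "\<forall>b\<in>B. dyadic b \<and> dyadic (f b)" and aff: "pow2_affine_pieces B f"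
    using assms unfolding dyadic_pl_def by blast
  obtain a k where a: "a \<in> B" and fx: "f x = f a + 2 powi k * (x - a)"
    using pow2_affine_pieces_at[OF fB B0 B01 aff assms(2)] by blast
  have "x = a + 2 powi (- k) * (f x - f a)" using fx by (simp add: power_int_minus field_simps)
  then show ?thesis using fx dyB a by (metis dyadic_add dyadic_diff dyadic_powi_mult)
qed

lemma dyadic_pl_id: "dyadic_pl id"
  unfolding dyadic_pl_def
proof (intro conjI homeo01_id exI[of _ "{0,1}"])
  show "pow2_affine_pieces {0, 1} id" unfolding pow2_affine_pieces_def by (auto intro: exI[of _ 0])
qed auto

lemma pow2_affine_pieces_comp:
  assumes hg: "homeo01 g" and affG: "pow2_affine_pieces Bg g" and affF: "pow2_affine_pieces Bf f"
  shows "pow2_affine_pieces (Bg \<union> {x\<in>{0..1}. g x \<in> Bf}) (f \<circ> g)"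
  unfolding pow2_affine_pieces_def
proof (intro allI impI)
  fix x y assume xy: "0 \<le> x \<and> x < y \<and> y \<le> 1 \<and> (\<forall>b\<in>Bg \<union> {x\<in>{0..1}. g x \<in> Bf}. b \<le> x \<or> y \<le> b)"
  then obtain kg where kg: "\<forall>z\<in>{x..y}. g z = g x + 2 powi kg * (z - x)"
    using affG unfolding pow2_affine_pieces_def by blast
  have "\<forall>c\<in>Bf. c \<le> g x \<or> g y \<le> c"
  proof (intro ballI)
    fix c assume c: "c \<in> Bf"
    obtain z where z: "c = g z" using homeo01_surj[OF hg] by (metis surjD)
    then have "z \<le> x \<or> y \<le> z" using xy c by auto
    then show "c \<le> g x \<or> g y \<le> c" using z homeo01_le_iff[OF hg] by auto
  qed
  moreover have "g x < g y" "0 \<le> g x" "g y \<le> 1"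
    using homeo01_less_iff[OF hg] homeo01_maps_unit_interval[OF hg] xy by auto
  ultimately obtain kf where kf: "\<forall>u\<in>{g x..g y}. f u = f (g x) + 2 powi kf * (u - g x)"
    using affF unfolding pow2_affine_pieces_def by blast
  have "(f \<circ> g) z = (f \<circ> g) x + 2 powi (kf + kg) * (z - x)" if z: "z \<in> {x..y}" for z
  proof -
    have "g z \<in> {g x..g y}" using z homeo01_le_iff[OF hg] by auto
    then have "f (g z) = f (g x) + 2 powi kf * (g z - g x)" using kf by blast
    moreover have "g z = g x + 2 powi kg * (z - x)" using kg z by blast
    ultimately show ?thesis by (simp add: power_int_add)
  qed
  then show "\<exists>k::int. \<forall>z\<in>{x..y}. (f \<circ> g) z = (f \<circ> g) x + 2 powi k * (z - x)" by blast
qed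

lemma dyadic_pl_comp: assumes f: "dyadic_pl f" and g: "dyadic_pl g" shows "dyadic_pl (f \<circ> g)"
proof -
  have hf: "homeo01 f" and hg: "homeo01 g" using f g by (auto simp: dyadic_pl_def)
  obtain Bf where fBf: "finite Bf" and dyBf: "\<forall>b\<in>Bf. dyadic b" and affF: "pow2_affine_pieces Bf f"
    using f unfolding dyadic_pl_def by blast
  obtain Bg where fBg: "finite Bg" and Bg01: "Bg \<subseteq> {0..1}" and Bg0: "0 \<in> Bg" and Bg1: "1 \<in> Bg"
    and dyBg: "\<forall>b\<in>Bg. dyadic b \<and> dyadic (g b)" and affG: "pow2_affine_pieces Bg g"
    using g unfolding dyadic_pl_def by blast
  define B where "B = Bg \<union> {x\<in>{0..1}. g x \<in> Bf}"
  have "finite (g -` Bf)" using fBf homeo01_inj[OF hg] by (simp add: finite_vimageI)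
  moreover have "{x\<in>{0..1}. g x \<in> Bf} \<subseteq> g -` Bf" by auto
  ultimately have "finite B" unfolding B_def using fBg finite_subset by blast
  moreover have "B \<subseteq> {0..1}" using Bg01 unfolding B_def by auto
  moreover have "dyadic b \<and> dyadic ((f \<circ> g) b)" if b: "b \<in> B" for b
  proof (cases "b \<in> Bg")
    case True
    then show ?thesis using dyBg Bg01 dyadic_pl_dyadic_iff[OF f] homeo01_maps_unit_interval[OF hg] by auto
  next
    case False
    then have "b \<in> {0..1}" "g b \<in> Bf" using b unfolding B_def by auto
    then show ?thesis using dyBf dyadic_pl_dyadic_iff[OF f] dyadic_pl_dyadic_iff[OF g]
      homeo01_maps_unit_interval[OF hg] by auto
  qed
  ultimately show ?thesis unfolding dyadic_pl_def
    using homeo01_comp[OF hf hg] pow2_affine_pieces_comp[OF hg affG affF] Bg0 Bg1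
    unfolding B_def by blast
qed

lemma pow2_affine_pieces_inv:
  assumes hf: "homeo01 f" and aff: "pow2_affine_pieces B f"
  shows "pow2_affine_pieces (f ` B) (inv_into UNIV f)"
  unfolding pow2_affine_pieces_def
proof (intro allI impI)
  fix x y assume xy: "0 \<le> x \<and> x < y \<and> y \<le> 1 \<and> (\<forall>b\<in>f ` B. b \<le> x \<or> y \<le> b)"
  have hi: "homeo01 (inv_into UNIV f)" using homeo01_inv[OF hf] .
  have fi: "f (inv_into UNIV f u) = u" for u using homeo01_surj[OF hf] by (simp add: surj_f_inv_f)
  define x' where "x' = inv_into UNIV f x"
  define y' where "y' = inv_into UNIV f y"
  have "x' < y'" "0 \<le> x'" "y' \<le> 1"
    using xy homeo01_less_iff[OF hi] homeo01_maps_unit_interval[OF hi] unfolding x'_def y'_def by auto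
  moreover have "b \<le> x' \<or> y' \<le> b" if "b \<in> B" for b
  proof -
    have "f b \<le> x \<or> y \<le> f b" using xy that by blast
    then show ?thesis using fi homeo01_le_iff[OF hf] unfolding x'_def y'_def by metis
  qed
  ultimately obtain k where k: "\<forall>z\<in>{x'..y'}. f z = f x' + 2 powi k * (z - x')"
    using aff unfolding pow2_affine_pieces_def by meson
  have "inv_into UNIV f z = inv_into UNIV f x + 2 powi (- k) * (z - x)" if z: "z \<in> {x..y}" for z
  proof -
    have "inv_into UNIV f z \<in> {x'..y'}" using z homeo01_le_iff[OF hi] unfolding x'_def y'_def by auto
    then have "f (inv_into UNIV f z) = f x' + 2 powi k * (inv_into UNIV f z - x')" using k by blast
    then have "z = x + 2 powi k * (inv_into UNIV f z - x')" using fi unfolding x'_def by simp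
    then show ?thesis unfolding x'_def by (simp add: power_int_minus field_simps)
  qed
  then show "\<exists>k::int. \<forall>z\<in>{x..y}. inv_into UNIV f z = inv_into UNIV f x + 2 powi k * (z - x)"
    by blast
qed

lemma dyadic_pl_inv: assumes f: "dyadic_pl f" shows "dyadic_pl (inv_into UNIV f)"
proof -
  have hf: "homeo01 f" using f by (auto simp: dyadic_pl_def)
  have if_: "inv_into UNIV f (f x) = x" for x using homeo01_inj[OF hf] by simp
  obtain B where "finite B" "B \<subseteq> {0..1}" "0 \<in> B" "1 \<in> B"
    and dyB: "\<forall>b\<in>B. dyadic b \<and> dyadic (f b)" and aff: "pow2_affine_pieces B f"
    using f unfolding dyadic_pl_def by blast
  moreover have "\<forall>b\<in>f ` B. dyadic b \<and> dyadic (inv_into UNIV f b)" using dyB if_ by auto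
  moreover have "f ` B \<subseteq> {0..1}" using \<open>B \<subseteq> {0..1}\<close> homeo01_maps_unit_interval[OF hf] by auto
  moreover have "0 \<in> f ` B" "1 \<in> f ` B"
    using \<open>0 \<in> B\<close> \<open>1 \<in> B\<close> homeo01_0[OF hf] homeo01_1[OF hf] by (metis image_eqI)+
  ultimately show ?thesis unfolding dyadic_pl_def
    using homeo01_inv[OF hf] pow2_affine_pieces_inv[OF hf aff] by blast
qed

subsection \<open>Thompson's group\<close>

lemma Thompson_F_carrier_iff: "f \<in> carrier Thompson_F \<longleftrightarrow> dyadic_pl f"
  by (simp add: Thompson_F_def thompson_F_set_iff_dyadic_pl)

lemma Thompson_F_mult [simp]: "f \<otimes>\<^bsub>Thompson_F\<^esub> g = f \<circ> g"
  by (simp add: Thompson_F_def)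

lemma Thompson_F_one [simp]: "\<one>\<^bsub>Thompson_F\<^esub> = id"
  by (simp add: Thompson_F_def)

lemma Thompson_F_homeo01: "f \<in> carrier Thompson_F \<Longrightarrow> homeo01 f"
  by (simp add: Thompson_F_carrier_iff dyadic_pl_def)

lemma group_Thompson_F: "group Thompson_F"
proof (rule groupI)
  fix f assume f: "f \<in> carrier Thompson_F"
  then have "inv_into UNIV f \<in> carrier Thompson_F" by (simp add: Thompson_F_carrier_iff dyadic_pl_inv)
  moreover have "inv_into UNIV f \<circ> f = id" using homeo01_inj[OF Thompson_F_homeo01[OF f]] by simp
  ultimately show "\<exists>g\<in>carrier Thompson_F. g \<otimes>\<^bsub>Thompson_F\<^esub> f = \<one>\<^bsub>Thompson_F\<^esub>" by auto
qed (auto simp: Thompson_F_carrier_iff dyadic_pl_comp dyadic_pl_id comp_assoc)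

lemma Thompson_F_inv:
  assumes f: "f \<in> carrier Thompson_F" shows "inv\<^bsub>Thompson_F\<^esub> f = inv_into UNIV f"
proof -
  interpret group Thompson_F by (rule group_Thompson_F)
  have "inv_into UNIV f \<in> carrier Thompson_F" using f by (simp add: Thompson_F_carrier_iff dyadic_pl_inv)
  moreover have "inv_into UNIV f \<circ> f = id" using homeo01_inj[OF Thompson_F_homeo01[OF f]] by simp
  ultimately show ?thesis using inv_equality[OF _ f] by simp
qed

definition bump :: "real \<Rightarrow> real \<Rightarrow> real \<Rightarrow> real" where
  "bump c L x = max (min x (max (c + (x - c) / 2) (x - L / 4))) (min (2 * x - c - L) x)"

lemma bump_eqs:
  assumes "0 < L"
  shows "x \<le> c \<Longrightarrow> bump c L x = x"
    and "c \<le> x \<Longrightarrow> x \<le> c + L/2 \<Longrightarrow> bump c L x = c + (x - c) / 2"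
    and "c + L/2 \<le> x \<Longrightarrow> x \<le> c + 3*L/4 \<Longrightarrow> bump c L x = x - L/4"
    and "c + 3*L/4 \<le> x \<Longrightarrow> x \<le> c + L \<Longrightarrow> bump c L x = 2 * x - c - L"
    and "c + L \<le> x \<Longrightarrow> bump c L x = x"
  using assms unfolding bump_def by (auto simp: max_def min_def field_simps)

lemma bump_homeo01:
  assumes L: "0 < L" and c: "0 \<le> c" and cL: "c + L \<le> 1"
  shows "homeo01 (bump c L)"
proof -
  have sm: "strict_mono (bump c L)"
    using L unfolding bump_def by (intro strict_monoI) (auto simp: max_def min_def field_simps)
  have cont: "continuous_on {0..1} (bump c L)"
    unfolding bump_def by (intro continuous_intros) auto
  have b0: "bump c L 0 = 0" and b1: "bump c L 1 = 1" using bump_eqs(1,5)[OF L] c cL by simp_all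
  have "bump c L ` {0..1} = {0..1}"
  proof
    show "bump c L ` {0..1} \<subseteq> {0..1}"
      using strict_mono_less_eq[OF sm] b0 b1 by (metis atLeastAtMost_iff image_subsetI)
    show "{0..1} \<subseteq> bump c L ` {0..1}"
      using IVT'[of "bump c L" 0 _ 1] b0 b1 cont by (force simp: image_iff)
  qed
  moreover have "\<forall>x. x \<notin> {0..1} \<longrightarrow> bump c L x = x" using bump_eqs(1,5)[OF L] c cL by auto
  ultimately show ?thesis unfolding homeo01_def using sm cont by (simp add: strict_mono_on_def strict_mono_def)
qed

lemma bump_in_Thompson_F:
  assumes L: "0 < L" and c: "0 < c" and cL: "c + L < 1" and dc: "dyadic c" and dL: "dyadic L"
  shows "bump c L \<in> carrier Thompson_F"
proof -
  define bs where "bs = [0, c, c + L/2, c + 3*L/4, c + L, 1::real]"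
  have "dyadic (L/2)" "dyadic (L/4)" using dyadic_divide_2[OF dL] dyadic_divide_2[of "L/2"] by simp_all
  moreover have "3*L/4 = L/2 + L/4" by simp
  ultimately have "dyadic (c + 3*L/4)" using dyadic_add[OF dc] dyadic_add[of "L/2" "L/4"] by simp
  then have dy: "\<forall>b\<in>set bs. dyadic b" unfolding bs_def using dc dL \<open>dyadic (L/2)\<close> by (auto intro: dyadic_add)
  have "\<exists>k::int. \<forall>x\<in>{bs ! i .. bs ! Suc i}. bump c L x = bump c L (bs ! i) + 2 powi k * (x - bs ! i)"
    if "Suc i < length bs" for i
  proof -
    have "i = 0 \<or> i = 1 \<or> i = 2 \<or> i = 3 \<or> i = 4" using that unfolding bs_def by auto
    then show ?thesis
    proof (elim disjE)
      assume "i = 1" then show ?thesis unfolding bs_def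
        using bump_eqs(2)[OF L] L by (intro exI[of _ "-1"]) (auto simp: power_int_minus)
    next
      assume "i = 3" then show ?thesis unfolding bs_def
        using bump_eqs(4)[OF L] L by (intro exI[of _ 1]) auto
    qed (unfold bs_def, use bump_eqs[OF L] L c cL in \<open>auto intro: exI[of _ 0]\<close>)
  qed
  moreover have "sorted_wrt (<) bs" unfolding bs_def using L c cL by auto
  moreover have "length bs \<ge> 2" "hd bs = 0" "last bs = 1" unfolding bs_def by simp_all
  ultimately have "bump c L \<in> thompson_F_set"
    unfolding thompson_F_set_iff using bump_homeo01[OF L] c cL dy by (meson less_imp_le)
  then show ?thesis by (simp add: Thompson_F_def)
qed

definition supported_on :: "'a set \<Rightarrow> ('a \<Rightarrow> 'a) \<Rightarrow> bool" where
  "supported_on S u \<longleftrightarrow> (\<forall>x. x \<notin> S \<longrightarrow> u x = x)"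

lemma supported_on_maps_into:
  assumes "inj u" "supported_on S u" "x \<in> S" shows "u x \<in> S"
  using assms unfolding supported_on_def by (metis injD)

lemma supported_on_comp: "supported_on S u \<Longrightarrow> supported_on S v \<Longrightarrow> supported_on S (u \<circ> v)"
  unfolding supported_on_def by simp

lemma supported_on_mono: "supported_on S u \<Longrightarrow> S \<subseteq> T \<Longrightarrow> supported_on T u"
  unfolding supported_on_def by blast

lemma supported_on_inv_into: "inj u \<Longrightarrow> supported_on S u \<Longrightarrow> supported_on S (inv_into UNIV u)"
  unfolding supported_on_def by (metis inv_f_f)

lemma supported_on_conjugate:
  assumes "bij b" "supported_on S u" shows "supported_on (b ` S) (b \<circ> u \<circ> inv_into UNIV b)"
  unfolding supported_on_def
proof (intro allI impI)
  fix x assume x: "x \<notin> b ` S"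
  have bx: "b (inv_into UNIV b x) = x" using assms(1) by (simp add: bij_is_surj surj_f_inv_f)
  then have "inv_into UNIV b x \<notin> S" using x by (metis image_eqI)
  then show "(b \<circ> u \<circ> inv_into UNIV b) x = x" using assms(2) bx unfolding supported_on_def by simp
qed

lemma commute_if_disjoint_supports:
  assumes "inj u" "inj v" "supported_on S u" "supported_on T v" "S \<inter> T = {}"
  shows "u \<circ> v = v \<circ> u"
proof
  fix x
  consider "x \<in> S" | "x \<in> T" | "x \<notin> S" "x \<notin> T" by blast
  then show "(u \<circ> v) x = (v \<circ> u) x"
  proof cases
    case 1 then have "u x \<in> S" using assms supported_on_maps_into by metis
    with 1 have "x \<notin> T" "u x \<notin> T" using assms(5) by auto
    then show ?thesis using assms(4) unfolding supported_on_def by simp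
  next
    case 2 then have "v x \<in> T" using assms supported_on_maps_into by metis
    with 2 have "x \<notin> S" "v x \<notin> S" using assms(5) by auto
    then show ?thesis using assms(3) unfolding supported_on_def by simp
  next
    case 3 then show ?thesis using assms unfolding supported_on_def by simp
  qed
qed

lemma Thompson_F_conjugate_commute:
  assumes b: "b \<in> carrier Thompson_F" and u: "u \<in> carrier Thompson_F" and v: "v \<in> carrier Thompson_F"
    and su: "supported_on S u" and sv: "supported_on S v" and disj: "b ` S \<inter> S = {}"
  shows "(b \<otimes>\<^bsub>Thompson_F\<^esub> u \<otimes>\<^bsub>Thompson_F\<^esub> inv\<^bsub>Thompson_F\<^esub> b) \<otimes>\<^bsub>Thompson_F\<^esub> v =
         v \<otimes>\<^bsub>Thompson_F\<^esub> (b \<otimes>\<^bsub>Thompson_F\<^esub> u \<otimes>\<^bsub>Thompson_F\<^esub> inv\<^bsub>Thompson_F\<^esub> b)"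
proof -
  interpret group Thompson_F by (rule group_Thompson_F)
  have eq: "b \<otimes>\<^bsub>Thompson_F\<^esub> u \<otimes>\<^bsub>Thompson_F\<^esub> inv\<^bsub>Thompson_F\<^esub> b = b \<circ> u \<circ> inv_into UNIV b"
    using b by (simp add: Thompson_F_inv)
  have "b \<otimes>\<^bsub>Thompson_F\<^esub> u \<otimes>\<^bsub>Thompson_F\<^esub> inv\<^bsub>Thompson_F\<^esub> b \<in> carrier Thompson_F"
    using b u by (intro m_closed inv_closed)
  then have "inj (b \<circ> u \<circ> inv_into UNIV b)" using eq homeo01_inj Thompson_F_homeo01 by metis
  then show ?thesis
    using commute_if_disjoint_supports[OF _ homeo01_inj[OF Thompson_F_homeo01[OF v]]
        supported_on_conjugate[OF homeo01_bij[OF Thompson_F_homeo01[OF b]] su] sv disj] eq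
    by simp
qed

lemma bump_supported_on:
  assumes "0 < L" shows "supported_on {c..c + L} (bump c L)"
  unfolding supported_on_def using bump_eqs(1,5)[OF assms] by auto

lemma bumps_not_commute:
  assumes L: "0 < L" shows "bump c L \<circ> bump c (L/2) \<noteq> bump c (L/2) \<circ> bump c L"
proof -
  have "bump c (L/2) (c + L/2) = c + L/2" using bump_eqs(5)[of "L/2" c "c + L/2"] L by simp
  moreover have "bump c L (c + L/2) = c + L/4" using bump_eqs(2)[OF L, of c "c + L/2"] L by simp
  moreover have "bump c (L/2) (c + L/4) = c + L/8" using bump_eqs(3)[of "L/2" c "c + L/4"] L by simp
  ultimately have "(bump c L \<circ> bump c (L/2)) (c + L/2) \<noteq> (bump c (L/2) \<circ> bump c L) (c + L/2)"
    using L by simp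
  then show ?thesis by metis
qed

lemma dyadic_interval_between:
  fixes p q :: real assumes "p < q"
  obtains c L where "dyadic c" "dyadic L" "0 < L" "p < c" "c + L < q"
proof -
  obtain n where n: "(1/2::real) ^ n < (q - p) / 3"
    using real_arch_pow_inv[of "(q - p)/3" "1/2"] assms by auto
  define L where "L = (1 / 2 ^ n :: real)"
  define c where "c = real_of_int (\<lfloor>p * 2 ^ n\<rfloor> + 1) / 2 ^ n"
  have "p * 2 ^ n < real_of_int (\<lfloor>p * 2 ^ n\<rfloor> + 1)" "real_of_int (\<lfloor>p * 2 ^ n\<rfloor> + 1) \<le> p * 2 ^ n + 1"
    by linarith+
  then have "p < c" "c \<le> p + L" unfolding c_def L_def by (simp_all add: field_simps)
  moreover have "3 * L < q - p" using n unfolding L_def by (simp add: power_one_over)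
  moreover have "dyadic c" unfolding c_def dyadic_def by blast
  moreover have "dyadic L" unfolding L_def by (rule dyadic_inverse_pow2)
  ultimately show ?thesis using that[of c L] unfolding L_def by simp
qed

lemma Thompson_F_moves_point_up:
  assumes h: "h \<in> carrier Thompson_F" and h1: "h \<noteq> \<one>\<^bsub>Thompson_F\<^esub>"
  obtains a p where "a = h \<or> a = inv\<^bsub>Thompson_F\<^esub> h" "p < a p"
proof -
  obtain p where p: "h p \<noteq> p" using h1 by (auto simp: fun_eq_iff)
  show ?thesis
  proof (cases "p < h p")
    case False
    have "(inv\<^bsub>Thompson_F\<^esub> h) (h p) = p"
      using Thompson_F_inv[OF h] homeo01_inj[OF Thompson_F_homeo01[OF h]] by simp
    then show ?thesis using that[of "inv\<^bsub>Thompson_F\<^esub> h" "h p"] p False by simp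
  qed (use that in blast)
qed

lemma Thompson_F_pow_moves_point_up:
  fixes N :: nat
  assumes a: "a \<in> carrier Thompson_F" and ap: "p < a p" and N: "1 \<le> N"
  shows "a p \<le> (a [^]\<^bsub>Thompson_F\<^esub> N) p"
proof -
  interpret group Thompson_F by (rule group_Thompson_F)
  have mono: "a x \<le> a y \<longleftrightarrow> x \<le> y" for x y using homeo01_le_iff[OF Thompson_F_homeo01[OF a]] .
  obtain n where "N = Suc n" using N by (cases N) auto
  moreover have "a p \<le> (a [^]\<^bsub>Thompson_F\<^esub> Suc n) p"
  proof (induction n)
    case (Suc n)
    then have "a p \<le> a ((a [^]\<^bsub>Thompson_F\<^esub> Suc n) p)" using mono ap by simp
    then show ?case using nat_pow_Suc2[OF a, of "Suc n"] by simp
  qed simp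
  ultimately show ?thesis by simp
qed

lemma Thompson_F_pow_displaces_interval:
  fixes N :: nat
  assumes a: "a \<in> carrier Thompson_F" and ap: "p < a p" and pc: "p < c" and cL: "c + L < a p"
    and N: "1 \<le> N"
  shows "(a [^]\<^bsub>Thompson_F\<^esub> N) ` {c..c + L} \<inter> {c..c + L} = {}"
proof -
  interpret group Thompson_F by (rule group_Thompson_F)
  have hb: "homeo01 (a [^]\<^bsub>Thompson_F\<^esub> N)" using a by (simp add: Thompson_F_homeo01)
  have "c + L < (a [^]\<^bsub>Thompson_F\<^esub> N) s" if "s \<in> {c..c + L}" for s
  proof -
    have "(a [^]\<^bsub>Thompson_F\<^esub> N) p < (a [^]\<^bsub>Thompson_F\<^esub> N) s"
      using that pc homeo01_less_iff[OF hb] by auto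
    then show ?thesis using Thompson_F_pow_moves_point_up[OF a ap N] cL by linarith
  qed
  then show ?thesis by fastforce
qed

subsection \<open>Commutators and conjugate powers\<close>

definition commutator :: "('a, 'b) monoid_scheme \<Rightarrow> 'a \<Rightarrow> 'a \<Rightarrow> 'a" where
  "commutator G x y = x \<otimes>\<^bsub>G\<^esub> y \<otimes>\<^bsub>G\<^esub> inv\<^bsub>G\<^esub> x \<otimes>\<^bsub>G\<^esub> inv\<^bsub>G\<^esub> y"

definition contains_conjugate_powers :: "('a, 'b) monoid_scheme \<Rightarrow> 'a set \<Rightarrow> 'a \<Rightarrow> bool" where
  "contains_conjugate_powers G M h \<longleftrightarrow>
     (\<forall>g\<in>carrier G. \<exists>N::nat. 1 \<le> N \<and> g \<otimes>\<^bsub>G\<^esub> h [^]\<^bsub>G\<^esub> N \<otimes>\<^bsub>G\<^esub> inv\<^bsub>G\<^esub> g \<in> M)"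

context group
begin

lemma inv_mult_cancel_left [simp]: "x \<in> carrier G \<Longrightarrow> y \<in> carrier G \<Longrightarrow> inv x \<otimes> (x \<otimes> y) = y"
  by (simp add: m_assoc[symmetric])

lemma mult_inv_cancel_left [simp]: "x \<in> carrier G \<Longrightarrow> y \<in> carrier G \<Longrightarrow> x \<otimes> (inv x \<otimes> y) = y"
  by (simp add: m_assoc[symmetric])

lemma subgroup_nat_pow_closed: "subgroup M G \<Longrightarrow> x \<in> M \<Longrightarrow> x [^] (n::nat) \<in> M"
  by (induction n) (auto simp: subgroup.one_closed subgroup.m_closed)

lemma commutator_closed [simp]: "x \<in> carrier G \<Longrightarrow> y \<in> carrier G \<Longrightarrow> commutator G x y \<in> carrier G"
  by (simp add: commutator_def)

lemma commutator_eq_one_iff: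
  assumes "x \<in> carrier G" "y \<in> carrier G" shows "commutator G x y = \<one> \<longleftrightarrow> x \<otimes> y = y \<otimes> x"
proof -
  have "commutator G x y = (x \<otimes> y) \<otimes> inv (y \<otimes> x)"
    using assms by (simp add: commutator_def inv_mult_group m_assoc)
  also have "\<dots> = \<one> \<longleftrightarrow> x \<otimes> y = \<one> \<otimes> (y \<otimes> x)"
    using assms by (intro inv_solve_right') auto
  finally show ?thesis using assms by simp
qed

text \<open>With \<open>d\<^sub>i = b x\<^sub>i\<^sup>-\<^sup>1 b\<^sup>-\<^sup>1\<close>, one has \<open>[x\<^sub>i, b] = x\<^sub>i d\<^sub>i\<close>; the commutation hypotheses move all
  \<open>d\<^sub>i\<close> to the right, and \<open>x\<^sub>1 x\<^sub>2 x\<^sub>3 = [x\<^sub>1, x\<^sub>2]\<close>, \<open>d\<^sub>1 d\<^sub>2 d\<^sub>3 = 1\<close> for \<open>x\<^sub>3 = (x\<^sub>2 x\<^sub>1)\<^sup>-\<^sup>1\<close>.\<close>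

lemma commutator_product:
  assumes c: "x1 \<in> carrier G" "x2 \<in> carrier G" "b \<in> carrier G"
    and c12: "(b \<otimes> inv x1 \<otimes> inv b) \<otimes> x2 = x2 \<otimes> (b \<otimes> inv x1 \<otimes> inv b)"
    and c13: "(b \<otimes> inv x1 \<otimes> inv b) \<otimes> inv (x2 \<otimes> x1) = inv (x2 \<otimes> x1) \<otimes> (b \<otimes> inv x1 \<otimes> inv b)"
    and c23: "(b \<otimes> inv x2 \<otimes> inv b) \<otimes> inv (x2 \<otimes> x1) = inv (x2 \<otimes> x1) \<otimes> (b \<otimes> inv x2 \<otimes> inv b)"
  shows "commutator G x1 b \<otimes> commutator G x2 b \<otimes> commutator G (inv (x2 \<otimes> x1)) b = commutator G x1 x2"
proof -
  define x3 where "x3 = inv (x2 \<otimes> x1)"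
  define d1 where "d1 = b \<otimes> inv x1 \<otimes> inv b"
  define d2 where "d2 = b \<otimes> inv x2 \<otimes> inv b"
  define d3 where "d3 = b \<otimes> inv x3 \<otimes> inv b"
  have [simp]: "x3 \<in> carrier G" "d1 \<in> carrier G" "d2 \<in> carrier G" "d3 \<in> carrier G"
    unfolding x3_def d1_def d2_def d3_def using c by auto
  note [simp] = c
  have e: "commutator G x b = x \<otimes> (b \<otimes> inv x \<otimes> inv b)" if "x \<in> carrier G" for x
    using that by (simp add: commutator_def m_assoc)
  have "commutator G x1 b \<otimes> commutator G x2 b \<otimes> commutator G x3 b = x1 \<otimes> (d1 \<otimes> x2) \<otimes> (d2 \<otimes> x3) \<otimes> d3"
    by (simp add: e d1_def d2_def d3_def m_assoc)
  also have "\<dots> = x1 \<otimes> x2 \<otimes> (d1 \<otimes> x3) \<otimes> d2 \<otimes> d3"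
    using c12 c23 unfolding d1_def d2_def x3_def by (simp add: m_assoc)
  also have "\<dots> = (x1 \<otimes> x2 \<otimes> x3) \<otimes> (d1 \<otimes> d2 \<otimes> d3)"
    using c13 unfolding d1_def x3_def by (simp add: m_assoc)
  also have "d1 \<otimes> d2 \<otimes> d3 = \<one>"
    unfolding d1_def d2_def d3_def x3_def by (simp add: m_assoc)
  also have "x1 \<otimes> x2 \<otimes> x3 = commutator G x1 x2"
    unfolding x3_def commutator_def by (simp add: inv_mult_group m_assoc)
  finally show ?thesis unfolding x3_def by simp
qed

lemma conjugate_pow:
  assumes "g \<in> carrier G" "x \<in> carrier G"
  shows "(g \<otimes> x \<otimes> inv g) [^] (n::nat) = g \<otimes> x [^] n \<otimes> inv g"
  using assms by (induction n) (simp_all add: m_assoc nat_pow_Suc2)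

lemma contains_conjugate_powers_common_power:
  assumes M: "subgroup M G" and hM: "contains_conjugate_powers G M h" and h: "h \<in> carrier G"
    and A: "finite A" "A \<subseteq> carrier G"
  shows "\<exists>N::nat. 1 \<le> N \<and> (\<forall>g\<in>A. g \<otimes> h [^] N \<otimes> inv g \<in> M)"
  using A
proof (induction A rule: finite_induct)
  case empty show ?case by (intro exI[of _ 1]) simp
next
  case (insert g A)
  then obtain N :: nat where N: "1 \<le> N" "\<forall>g'\<in>A. g' \<otimes> h [^] N \<otimes> inv g' \<in> M" by auto
  obtain K :: nat where K: "1 \<le> K" "g \<otimes> h [^] K \<otimes> inv g \<in> M"
    using hM insert.prems unfolding contains_conjugate_powers_def by auto
  have mult: "g' \<otimes> h [^] (n * m) \<otimes> inv g' \<in> M"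
    if "g' \<in> carrier G" "g' \<otimes> h [^] n \<otimes> inv g' \<in> M" for g' and n m :: nat
    using subgroup_nat_pow_closed[OF M that(2), of m] conjugate_pow[OF that(1) nat_pow_closed[OF h]]
    by (simp add: nat_pow_pow[OF h])
  have "\<forall>g'\<in>A. g' \<otimes> h [^] (N * K) \<otimes> inv g' \<in> M" using mult N(2) insert.prems by blast
  moreover have "g \<otimes> h [^] (N * K) \<otimes> inv g \<in> M"
    using mult[of g K N] K(2) insert.prems by (simp add: mult.commute)
  ultimately have "\<forall>g'\<in>insert g A. g' \<otimes> h [^] (N * K) \<otimes> inv g' \<in> M" by blast
  then show ?case using N K by (intro exI[of _ "N * K"]) simp
qed

lemma commutator_trapped:
  assumes M: "subgroup M G" and hM: "contains_conjugate_powers G M h" and h: "h \<in> carrier G"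
    and a: "a = h \<or> a = inv h" and x: "x1 \<in> carrier G" "x2 \<in> carrier G"
    and prod: "\<And>N::nat. 1 \<le> N \<Longrightarrow> commutator G x1 (a [^] N) \<otimes> commutator G x2 (a [^] N)
        \<otimes> commutator G (inv (x2 \<otimes> x1)) (a [^] N) = commutator G x1 x2"
  shows "commutator G x1 x2 \<in> M"
proof -
  define A where "A = {\<one>, x1, x2, inv (x2 \<otimes> x1)}"
  have A: "finite A" "A \<subseteq> carrier G" unfolding A_def using x by auto
  obtain N :: nat where N: "1 \<le> N" and hN: "\<forall>g\<in>A. g \<otimes> h [^] N \<otimes> inv g \<in> M"
    using contains_conjugate_powers_common_power[OF M hM h A] by blast
  have aN: "g \<otimes> a [^] N \<otimes> inv g \<in> M" if "g \<in> A" for g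
  proof -
    have g: "g \<in> carrier G" using that A by auto
    have "g \<otimes> inv (h [^] N) \<otimes> inv g = inv (g \<otimes> h [^] N \<otimes> inv g)"
      using g h by (simp add: inv_mult_group m_assoc)
    then show ?thesis using a hN that subgroup.m_inv_closed[OF M] h by (auto simp: nat_pow_inv)
  qed
  have bM: "a [^] N \<in> M" using aN[of \<one>] a h unfolding A_def by auto
  have "commutator G g (a [^] N) \<in> M" if "g \<in> A" for g
    using aN[OF that] subgroup.m_closed[OF M] subgroup.m_inv_closed[OF M bM]
    unfolding commutator_def by blast
  then have "commutator G x1 (a [^] N) \<otimes> commutator G x2 (a [^] N)
        \<otimes> commutator G (inv (x2 \<otimes> x1)) (a [^] N) \<in> M"
    using subgroup.m_closed[OF M] unfolding A_def by simp
  then show ?thesis using prod[OF N] by simp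
qed

end


lemma Thompson_F_inv_supported_on:
  assumes "x \<in> carrier Thompson_F" "supported_on S x"
  shows "supported_on S (inv\<^bsub>Thompson_F\<^esub> x)"
  using Thompson_F_inv[OF assms(1)]
    supported_on_inv_into[OF homeo01_inj[OF Thompson_F_homeo01[OF assms(1)]] assms(2)] by simp

lemma Thompson_F_displaced_bumps:
  assumes ac: "a \<in> carrier Thompson_F" and ap: "p < a p"
  obtains x1 x2 S where "x1 \<in> carrier Thompson_F" "x2 \<in> carrier Thompson_F"
    "supported_on S x1" "supported_on S x2" "x1 \<otimes>\<^bsub>Thompson_F\<^esub> x2 \<noteq> x2 \<otimes>\<^bsub>Thompson_F\<^esub> x1"
    "\<And>N::nat. 1 \<le> N \<Longrightarrow> (a [^]\<^bsub>Thompson_F\<^esub> N) ` S \<inter> S = {}"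
proof -
  have ha: "homeo01 a" using Thompson_F_homeo01[OF ac] .
  have "p \<in> {0..1}" using ap homeo01_fixes_outside[OF ha] by force
  then have p0: "0 \<le> p" and ap1: "a p \<le> 1" using homeo01_maps_unit_interval[OF ha] by auto
  obtain c L where dc: "dyadic c" and dL: "dyadic L" and L: "0 < L" and pc: "p < c" and cL: "c + L < a p"
    using dyadic_interval_between[OF ap] .
  have "bump c L \<in> carrier Thompson_F" "supported_on {c..c + L} (bump c L)"
    using bump_in_Thompson_F bump_supported_on L pc p0 cL ap1 dc dL by auto
  moreover have "bump c (L/2) \<in> carrier Thompson_F" "supported_on {c..c + L} (bump c (L/2))"
    using bump_in_Thompson_F[of "L/2" c] bump_supported_on[of "L/2" c]
      L pc p0 cL ap1 dc dyadic_divide_2[OF dL] by (auto elim!: supported_on_mono)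
  moreover have "bump c L \<otimes>\<^bsub>Thompson_F\<^esub> bump c (L/2) \<noteq> bump c (L/2) \<otimes>\<^bsub>Thompson_F\<^esub> bump c L"
    using bumps_not_commute[OF L] by simp
  ultimately show ?thesis using that Thompson_F_pow_displaces_interval[OF ac ap pc cL] by blast
qed

lemma Thompson_F_commutator_product:
  assumes h: "h \<in> carrier Thompson_F" and h1: "h \<noteq> \<one>\<^bsub>Thompson_F\<^esub>"
  obtains a x1 x2 where "a = h \<or> a = inv\<^bsub>Thompson_F\<^esub> h"
    "x1 \<in> carrier Thompson_F" "x2 \<in> carrier Thompson_F"
    "x1 \<otimes>\<^bsub>Thompson_F\<^esub> x2 \<noteq> x2 \<otimes>\<^bsub>Thompson_F\<^esub> x1"
    "\<And>N::nat. 1 \<le> N \<Longrightarrow>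
      commutator Thompson_F x1 (a [^]\<^bsub>Thompson_F\<^esub> N) \<otimes>\<^bsub>Thompson_F\<^esub> commutator Thompson_F x2 (a [^]\<^bsub>Thompson_F\<^esub> N)
      \<otimes>\<^bsub>Thompson_F\<^esub> commutator Thompson_F (inv\<^bsub>Thompson_F\<^esub> (x2 \<otimes>\<^bsub>Thompson_F\<^esub> x1)) (a [^]\<^bsub>Thompson_F\<^esub> N)
      = commutator Thompson_F x1 x2"
proof -
  interpret group Thompson_F by (rule group_Thompson_F)
  obtain a p where a: "a = h \<or> a = inv\<^bsub>Thompson_F\<^esub> h" and ap: "p < a p"
    using Thompson_F_moves_point_up[OF h h1] .
  have ac: "a \<in> carrier Thompson_F" using a h by auto
  obtain x1 x2 S where x: "x1 \<in> carrier Thompson_F" "x2 \<in> carrier Thompson_F"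
    and sx: "supported_on S x1" "supported_on S x2"
    and nc: "x1 \<otimes>\<^bsub>Thompson_F\<^esub> x2 \<noteq> x2 \<otimes>\<^bsub>Thompson_F\<^esub> x1"
    and disj: "\<And>N::nat. 1 \<le> N \<Longrightarrow> (a [^]\<^bsub>Thompson_F\<^esub> N) ` S \<inter> S = {}"
    using Thompson_F_displaced_bumps[OF ac ap] by blast
  have "supported_on S (x2 \<otimes>\<^bsub>Thompson_F\<^esub> x1)" using supported_on_comp[OF sx(2,1)] by simp
  note inv_supp = Thompson_F_inv_supported_on[OF x(1) sx(1)] Thompson_F_inv_supported_on[OF x(2) sx(2)]
    Thompson_F_inv_supported_on[OF m_closed[OF x(2,1)] this]
  have "commutator Thompson_F x1 (a [^]\<^bsub>Thompson_F\<^esub> N) \<otimes>\<^bsub>Thompson_F\<^esub> commutator Thompson_F x2 (a [^]\<^bsub>Thompson_F\<^esub> N)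
      \<otimes>\<^bsub>Thompson_F\<^esub> commutator Thompson_F (inv\<^bsub>Thompson_F\<^esub> (x2 \<otimes>\<^bsub>Thompson_F\<^esub> x1)) (a [^]\<^bsub>Thompson_F\<^esub> N)
      = commutator Thompson_F x1 x2" if N: "1 \<le> N" for N :: nat
    using x ac inv_supp sx inv_closed[OF m_closed[OF x(2,1)]]
    by (intro commutator_product Thompson_F_conjugate_commute[OF _ _ _ _ _ disj[OF N]]) auto
  then show ?thesis using that a x nc by blast
qed

lemma Thompson_F_conjugate_powers_trap:
  assumes h: "h \<in> carrier Thompson_F" and h1: "h \<noteq> \<one>\<^bsub>Thompson_F\<^esub>"
  obtains w where "w \<in> carrier Thompson_F" "w \<noteq> \<one>\<^bsub>Thompson_F\<^esub>"
    "\<And>M. subgroup M Thompson_F \<Longrightarrow> contains_conjugate_powers Thompson_F M h \<Longrightarrow> w \<in> M"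
proof -
  interpret group Thompson_F by (rule group_Thompson_F)
  obtain a x1 x2 where a: "a = h \<or> a = inv\<^bsub>Thompson_F\<^esub> h" and x: "x1 \<in> carrier Thompson_F" "x2 \<in> carrier Thompson_F"
    and nc: "x1 \<otimes>\<^bsub>Thompson_F\<^esub> x2 \<noteq> x2 \<otimes>\<^bsub>Thompson_F\<^esub> x1"
    and prod: "\<And>N::nat. 1 \<le> N \<Longrightarrow>
      commutator Thompson_F x1 (a [^]\<^bsub>Thompson_F\<^esub> N) \<otimes>\<^bsub>Thompson_F\<^esub> commutator Thompson_F x2 (a [^]\<^bsub>Thompson_F\<^esub> N)
      \<otimes>\<^bsub>Thompson_F\<^esub> commutator Thompson_F (inv\<^bsub>Thompson_F\<^esub> (x2 \<otimes>\<^bsub>Thompson_F\<^esub> x1)) (a [^]\<^bsub>Thompson_F\<^esub> N)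
      = commutator Thompson_F x1 x2"
    using Thompson_F_commutator_product[OF h h1] by metis
  show ?thesis
  proof (rule that)
    show "commutator Thompson_F x1 x2 \<in> carrier Thompson_F" using x by simp
    show "commutator Thompson_F x1 x2 \<noteq> \<one>\<^bsub>Thompson_F\<^esub>" using commutator_eq_one_iff[OF x] nc by blast
    show "commutator Thompson_F x1 x2 \<in> M"
      if "subgroup M Thompson_F" "contains_conjugate_powers Thompson_F M h" for M
      using commutator_trapped[OF that h a x prod] .
  qed
qed


subsection \<open>Totally disconnected locally compact groups\<close>

lemma totally_disconnected_space_subtopology:
  "totally_disconnected_space X \<Longrightarrow> totally_disconnected_space (subtopology X S)"
  unfolding totally_disconnected_space_def using connectedin_subtopology by blast

lemma compact_totally_disconnected_clopen_separation:
  assumes "compact_space X" "Hausdorff_space X" "totally_disconnected_space X"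
    and x: "x \<in> topspace X" and y: "y \<in> topspace X" "y \<noteq> x"
  obtains C where "closedin X C" "openin X C" "x \<in> C" "y \<notin> C"
proof -
  have "\<not> connected_component_of X x y"
    using assms(3) y(2) unfolding totally_disconnected_space_def connected_component_of_def by blast
  then have "\<not> quasi_component_of X x y" using quasi_eq_connected_component_of assms(1,2) by metis
  then obtain C where C: "closedin X C" "openin X C" "\<not> (x \<in> C \<longleftrightarrow> y \<in> C)"
    unfolding quasi_component_of_def using x y by blast
  show ?thesis
  proof (cases "x \<in> C")
    case False
    then show ?thesis using that[of "topspace X - C"] C x by auto
  qed (use that C in blast)
qed

definition topological_group :: "('a, 'b) monoid_scheme \<Rightarrow> 'a topology \<Rightarrow> bool" where
  "topological_group G T \<longleftrightarrow> group G \<and> topspace T = carrier G \<and>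
     continuous_map (prod_topology T T) T (\<lambda>(x, y). x \<otimes>\<^bsub>G\<^esub> y) \<and>
     continuous_map T T (\<lambda>x. inv\<^bsub>G\<^esub> x)"

lemma tdlc_group_iff:
  "tdlc_group G T \<longleftrightarrow> topological_group G T \<and>
     Hausdorff_space T \<and> locally_compact_space T \<and> totally_disconnected_space T"
  unfolding tdlc_group_def topological_group_def by blast

lemma group_hom_subgroup_vimage:
  assumes "group_hom G H h" "subgroup M H" shows "subgroup (carrier G \<inter> h -` M) G"
proof -
  interpret group_hom G H h by fact
  show ?thesis
    by (rule G.subgroupI) (use assms(2) in \<open>auto simp: subgroup.one_closed subgroup.m_inv_closed subgroup.m_closed\<close>)
qed

lemma (in group) conjugation_group_hom:
  "g \<in> carrier G \<Longrightarrow> group_hom G G (\<lambda>x. g \<otimes> x \<otimes> inv g)"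
  unfolding group_hom_def group_hom_axioms_def
  by (auto intro!: homI simp: m_assoc is_group)

context group
begin

lemma topological_group_left_mult_continuous:
  assumes TG: "topological_group G T" and a: "a \<in> carrier G"
  shows "continuous_map T T (\<lambda>x. a \<otimes> x)"
proof -
  have "continuous_map T (prod_topology T T) (\<lambda>x. (a, x))"
    using TG a unfolding topological_group_def by (intro continuous_map_pairedI) auto
  moreover have "continuous_map (prod_topology T T) T (\<lambda>(x, y). x \<otimes> y)"
    using TG unfolding topological_group_def by blast
  ultimately show ?thesis using continuous_map_compose by (fastforce simp: o_def)
qed

lemma topological_group_right_mult_continuous:
  assumes TG: "topological_group G T" and a: "a \<in> carrier G"
  shows "continuous_map T T (\<lambda>x. x \<otimes> a)"
proof -
  have "continuous_map T (prod_topology T T) (\<lambda>x. (x, a))"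
    using TG a unfolding topological_group_def by (intro continuous_map_pairedI) auto
  moreover have "continuous_map (prod_topology T T) T (\<lambda>(x, y). x \<otimes> y)"
    using TG unfolding topological_group_def by blast
  ultimately show ?thesis using continuous_map_compose by (fastforce simp: o_def)
qed

lemma open_conjugate_subgroup:
  assumes TG: "topological_group G T" and g: "g \<in> carrier G"
    and M: "subgroup M G" "openin T M"
  shows "subgroup {x \<in> carrier G. g \<otimes> x \<otimes> inv g \<in> M} G"
    and "openin T {x \<in> carrier G. g \<otimes> x \<otimes> inv g \<in> M}"
proof -
  show "subgroup {x \<in> carrier G. g \<otimes> x \<otimes> inv g \<in> M} G"
    using group_hom_subgroup_vimage[OF conjugation_group_hom[OF g] M(1)] by (simp add: Int_def)
  have "continuous_map T T ((\<lambda>x. x \<otimes> inv g) \<circ> (\<lambda>x. g \<otimes> x))"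
    using topological_group_left_mult_continuous[OF TG g]
      topological_group_right_mult_continuous[OF TG inv_closed[OF g]]
    by (rule continuous_map_compose)
  from openin_continuous_map_preimage[OF this M(2)] TG
  show "openin T {x \<in> carrier G. g \<otimes> x \<otimes> inv g \<in> M}"
    unfolding topological_group_def by simp
qed


lemma compact_subgroup_pow_in_open_subgroup:
  assumes TG: "topological_group G T" and K: "subgroup K G" "compactin T K"
    and M: "subgroup M G" "openin T M" and z: "z \<in> K"
  shows "\<exists>N::nat. 1 \<le> N \<and> z [^] N \<in> M"
proof -
  have Kc: "K \<subseteq> carrier G" using subgroup.subset[OF K(1)] .
  define coset where "coset k = {x \<in> topspace T. inv k \<otimes> x \<in> M}" for k
  have "openin T (coset k)" if "k \<in> K" for k
    unfolding coset_def using topological_group_left_mult_continuous[OF TG, of "inv k"] that Kc M(2)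
    by (intro openin_continuous_map_preimage) auto
  moreover have "K \<subseteq> \<Union> (coset ` K)"
    using TG Kc subgroup.one_closed[OF M(1)] unfolding coset_def topological_group_def by fastforce
  ultimately obtain F where F: "finite F" "F \<subseteq> coset ` K" "K \<subseteq> \<Union> F"
    using K(2) unfolding compactin_def by (metis (no_types, lifting) imageE)
  have zc: "z \<in> carrier G" using z Kc by auto
  have "\<forall>n::nat. \<exists>S. S \<in> F \<and> z [^] n \<in> S" using subgroup_nat_pow_closed[OF K(1) z] F(3) by blast
  then obtain C where C: "\<And>n::nat. C n \<in> F \<and> z [^] n \<in> C n" by metis
  have "\<not> inj_on C {..card F}"
  proof
    assume "inj_on C {..card F}"
    then have "card {..card F} \<le> card F" using card_inj_on_le F(1) C by blast
    then show False by simp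
  qed
  then obtain i j where ij: "i < j" "C i = C j"
    unfolding inj_on_def by (metis linorder_neqE_nat)
  obtain k where k: "k \<in> K" "C i = coset k" using C[of i] F(2) by blast
  have "inv k \<otimes> z [^] i \<in> M" "inv k \<otimes> z [^] j \<in> M" using C[of i] C[of j] k ij unfolding coset_def by auto
  then have "inv (inv k \<otimes> z [^] i) \<otimes> (inv k \<otimes> z [^] j) \<in> M"
    using subgroup.m_closed[OF M(1)] subgroup.m_inv_closed[OF M(1)] by blast
  moreover have "z [^] j = z [^] i \<otimes> z [^] (j - i)" using zc ij by (simp add: nat_pow_mult)
  then have "inv (inv k \<otimes> z [^] i) \<otimes> (inv k \<otimes> z [^] j) = z [^] (j - i)"
    using k Kc zc by (auto simp: inv_mult_group m_assoc)
  ultimately show ?thesis using ij by (intro exI[of _ "j - i"]) auto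
qed


lemma compact_subgroup_contains_conjugate_powers:
  assumes TG: "topological_group G T" and K: "subgroup K G" "compactin T K"
    and M: "subgroup M G" "openin T M" and z: "z \<in> K"
  shows "contains_conjugate_powers G M z"
  unfolding contains_conjugate_powers_def
proof
  fix g assume g: "g \<in> carrier G"
  obtain N :: nat where "1 \<le> N" "z [^] N \<in> {x \<in> carrier G. g \<otimes> x \<otimes> inv g \<in> M}"
    using compact_subgroup_pow_in_open_subgroup[OF TG K open_conjugate_subgroup[OF TG g M] z] by blast
  then show "\<exists>N::nat. 1 \<le> N \<and> g \<otimes> z [^] N \<otimes> inv g \<in> M" by blast
qed

lemma compact_open_absorbs_symmetric_nbhd:
  assumes TG: "topological_group G T" and C: "compactin T C" "openin T C"
  obtains V where "openin T V" "\<one> \<in> V" "\<And>v. v \<in> V \<Longrightarrow> inv v \<in> V"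
    "\<And>c v. c \<in> C \<Longrightarrow> v \<in> V \<Longrightarrow> c \<otimes> v \<in> C"
proof -
  have ts: "topspace T = carrier G" and mult: "continuous_map (prod_topology T T) T (\<lambda>(x, y). x \<otimes> y)"
    and invc: "continuous_map T T (\<lambda>x. inv x)"
    using TG unfolding topological_group_def by auto
  have Cc: "C \<subseteq> carrier G" using openin_subset[OF C(2)] ts by simp
  define W where "W = {p \<in> topspace (prod_topology T T). (\<lambda>(x, y). x \<otimes> y) p \<in> C}"
  have "openin (prod_topology T T) W" unfolding W_def using mult C(2) by (rule openin_continuous_map_preimage)
  moreover have "C \<times> {\<one>} \<subseteq> W" unfolding W_def using Cc ts by auto
  ultimately obtain U V where UV: "openin T V" "\<one> \<in> V" "C \<subseteq> U" "U \<times> V \<subseteq> W"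
    using tube_lemma_left[OF _ C(1), of T W \<one>] ts by auto
  define V' where "V' = {x \<in> topspace T. inv x \<in> V} \<inter> V"
  have "openin T V'" unfolding V'_def
    using openin_continuous_map_preimage[OF invc UV(1)] UV(1) by (rule openin_Int)
  moreover have "\<one> \<in> V'" unfolding V'_def using UV(2) ts by simp
  moreover have "inv v \<in> V'" if "v \<in> V'" for v
    using that openin_subset[OF UV(1)] ts unfolding V'_def by auto
  moreover have "c \<otimes> v \<in> C" if "c \<in> C" "v \<in> V'" for c v
  proof -
    have "(c, v) \<in> W" using UV(3,4) that unfolding V'_def by blast
    then show ?thesis unfolding W_def by simp
  qed
  ultimately show ?thesis using that by blast
qed

lemma right_stabilizer_subgroup:
  assumes Cc: "C \<subseteq> carrier G"
  shows "subgroup {x \<in> carrier G. (\<forall>c\<in>C. c \<otimes> x \<in> C) \<and> (\<forall>c\<in>C. c \<otimes> inv x \<in> C)} G"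
    (is "subgroup ?M G")
proof (rule subgroupI)
  fix a b assume a: "a \<in> ?M" and b: "b \<in> ?M"
  then have ab: "a \<in> carrier G" "b \<in> carrier G" by auto
  have "c \<otimes> (a \<otimes> b) = c \<otimes> a \<otimes> b" "c \<otimes> inv (a \<otimes> b) = c \<otimes> inv b \<otimes> inv a" if "c \<in> C" for c
    using that Cc ab by (auto simp: m_assoc inv_mult_group)
  then show "a \<otimes> b \<in> ?M" using a b ab by auto
next
  have "\<one> \<in> ?M" using Cc by auto
  then show "?M \<noteq> {}" by blast
qed auto

lemma open_subgroup_in_compact_open:
  assumes TG: "topological_group G T" and C: "compactin T C" "openin T C" "\<one> \<in> C"
  obtains M where "subgroup M G" "openin T M" "M \<subseteq> C"
proof -
  obtain V where V: "openin T V" "\<one> \<in> V" "\<And>v. v \<in> V \<Longrightarrow> inv v \<in> V"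
    and CV: "\<And>c v. c \<in> C \<Longrightarrow> v \<in> V \<Longrightarrow> c \<otimes> v \<in> C"
    using compact_open_absorbs_symmetric_nbhd[OF TG C(1,2)] by blast
  have ts: "topspace T = carrier G" using TG unfolding topological_group_def by blast
  have Cc: "C \<subseteq> carrier G" using openin_subset[OF C(2)] ts by simp
  define M where "M = {x \<in> carrier G. (\<forall>c\<in>C. c \<otimes> x \<in> C) \<and> (\<forall>c\<in>C. c \<otimes> inv x \<in> C)}"
  have "subgroup M G" unfolding M_def using right_stabilizer_subgroup[OF Cc] .
  moreover have "openin T M"
    unfolding openin_subopen[of T M]
  proof
    fix x assume xM: "x \<in> M"
    then have xc: "x \<in> carrier G" unfolding M_def by auto
    define U where "U = {z \<in> topspace T. inv x \<otimes> z \<in> V}"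
    have "openin T U" unfolding U_def
      using topological_group_left_mult_continuous[OF TG inv_closed[OF xc]] V(1)
      by (rule openin_continuous_map_preimage)
    moreover have "x \<in> U" unfolding U_def using xc ts V(2) by simp
    moreover have "U \<subseteq> M"
    proof
      fix z assume "z \<in> U"
      then have zc: "z \<in> carrier G" and v: "inv x \<otimes> z \<in> V" unfolding U_def using ts by auto
      have "c \<otimes> z = (c \<otimes> x) \<otimes> (inv x \<otimes> z)" "c \<otimes> inv z = (c \<otimes> inv (inv x \<otimes> z)) \<otimes> inv x"
        if "c \<in> C" for c using that Cc xc zc by (auto simp: m_assoc inv_mult_group)
      then show "z \<in> M" using xM v V(3) CV zc unfolding M_def by auto
    qed
    ultimately show "\<exists>U. openin T U \<and> x \<in> U \<and> U \<subseteq> M" by blast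
  qed
  moreover have "M \<subseteq> C" using C(3) unfolding M_def by fastforce
  ultimately show ?thesis using that by blast
qed

lemma open_subgroup_avoiding:
  assumes TG: "topological_group G T" and HT: "Hausdorff_space T" "totally_disconnected_space T"
    and K: "subgroup K G" "openin T K" "compactin T K"
    and y: "y \<in> carrier G" "y \<noteq> \<one>"
  obtains M where "subgroup M G" "openin T M" "y \<notin> M"
proof (cases "y \<in> K")
  case yK: True
  define X where "X = subtopology T K"
  have ts: "topspace T = carrier G" using TG unfolding topological_group_def by blast
  have tX: "topspace X = K" unfolding X_def using subgroup.subset[OF K(1)] ts by auto
  obtain C where C: "closedin X C" "openin X C" "\<one> \<in> C" "y \<notin> C"
  proof (rule compact_totally_disconnected_clopen_separation[of X \<one> y])
    show "compact_space X" unfolding X_def by (rule compact_space_subtopology[OF K(3)])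
    show "Hausdorff_space X" unfolding X_def by (rule Hausdorff_space_subtopology[OF HT(1)])
    show "totally_disconnected_space X" unfolding X_def by (rule totally_disconnected_space_subtopology[OF HT(2)])
  qed (use tX yK y subgroup.one_closed[OF K(1)] in auto)
  have "compactin T C"
    using closedin_compact_space[OF compact_space_subtopology[OF K(3)]] C(1)
    unfolding X_def compactin_subtopology by blast
  moreover have "openin T C" using C(2) K(2) unfolding X_def by (rule openin_trans_full)
  ultimately obtain M where "subgroup M G" "openin T M" "M \<subseteq> C"
    using open_subgroup_in_compact_open[OF TG _ _ C(3)] by blast
  then show ?thesis using that C(4) by blast
next
  case False
  then show ?thesis using that K(1,2) by blast
qed

end

subsection \<open>Group actions on locally finite graphs\<close>

primrec graph_ball :: "('v \<Rightarrow> 'v \<Rightarrow> bool) \<Rightarrow> 'v \<Rightarrow> nat \<Rightarrow> 'v set" where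
  "graph_ball Ed v 0 = {v}"
| "graph_ball Ed v (Suc n) = graph_ball Ed v n \<union> {y. \<exists>x\<in>graph_ball Ed v n. Ed x y}"

lemma graph_ball_subset:
  assumes "connected_locfin_graph V Ed" "v \<in> V" shows "graph_ball Ed v n \<subseteq> V"
  using assms by (induction n) (auto simp: connected_locfin_graph_def)

lemma finite_graph_ball:
  assumes G: "connected_locfin_graph V Ed" and v: "v \<in> V" shows "finite (graph_ball Ed v n)"
proof (induction n)
  case (Suc n)
  have "{y. \<exists>x\<in>graph_ball Ed v n. Ed x y} = (\<Union>x\<in>graph_ball Ed v n. {y. Ed x y})" by auto
  moreover have "finite (\<Union>x\<in>graph_ball Ed v n. {y. Ed x y})"
    using Suc graph_ball_subset[OF G v, of n] G unfolding connected_locfin_graph_def by blast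
  ultimately show ?case using Suc by simp
qed simp

lemma in_some_graph_ball:
  assumes G: "connected_locfin_graph V Ed" and v: "v \<in> V" and t: "t \<in> V"
  obtains n where "t \<in> graph_ball Ed v n"
proof -
  obtain p where p: "p \<noteq> []" "hd p = v" "last p = t"
    "\<forall>i. Suc i < length p \<longrightarrow> Ed (p ! i) (p ! Suc i)"
    using G v t unfolding connected_locfin_graph_def graph_reachable_def by blast
  have "i < length p \<longrightarrow> p ! i \<in> graph_ball Ed v i" for i
    by (induction i) (use p in \<open>auto simp: hd_conv_nth\<close>)
  then show ?thesis using that p(1,3) by (metis last_conv_nth diff_less less_numeral_extra(1) length_greater_0_conv)
qed

context group_action
begin

lemma graph_ball_invariant:
  assumes GA: "graph_action G E Ed \<phi>" and G: "connected_locfin_graph E Ed"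
    and h: "h \<in> carrier G" and v: "v \<in> E" and hv: "\<phi> h v = v"
  shows "x \<in> graph_ball Ed v n \<Longrightarrow> \<phi> h x \<in> graph_ball Ed v n"
proof (induction n arbitrary: x)
  case (Suc n)
  show ?case
  proof (cases "x \<in> graph_ball Ed v n")
    case False
    then obtain y where y: "y \<in> graph_ball Ed v n" "Ed y x" using Suc.prems by auto
    then have "Ed (\<phi> h y) (\<phi> h x)"
      using GA G h unfolding graph_action_def connected_locfin_graph_def by blast
    then show ?thesis using Suc.IH[OF y(1)] by auto
  qed (use Suc.IH in simp)
qed (use hv in simp)

lemma pow_fixes_vertex:
  assumes GA: "graph_action G E Ed \<phi>" and G: "connected_locfin_graph E Ed"
    and h: "h \<in> carrier G" and v: "v \<in> E" and hv: "\<phi> h v = v" and t: "t \<in> E"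
  obtains N :: nat where "1 \<le> N" "\<phi> (h [^]\<^bsub>G\<^esub> N) t = t"
proof -
  interpret group G using group_hom group_hom.axioms(1) by auto
  obtain n where tn: "t \<in> graph_ball Ed v n" using in_some_graph_ball[OF G v t] .
  define R where "R = graph_ball Ed v n"
  have RE: "R \<subseteq> E" and fR: "finite R" unfolding R_def using graph_ball_subset[OF G v] finite_graph_ball[OF G v] by auto
  have orbit_in_R: "\<phi> (h [^] k) t \<in> R" for k :: nat
  proof (induction k)
    case (Suc k)
    have "\<phi> (h [^] Suc k) t = \<phi> (h \<otimes> h [^] k) t" by (simp only: nat_pow_Suc2[OF h])
    also have "\<dots> = \<phi> h (\<phi> (h [^] k) t)" using composition_rule[of t h "h [^] k"] t h by simp
    finally have "\<phi> (h [^] Suc k) t = \<phi> h (\<phi> (h [^] k) t)" .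
    then show ?case using graph_ball_invariant[OF GA G h v hv] Suc unfolding R_def by simp
  qed (use tn id_eq_one[symmetric] t R_def in auto)
  have "\<not> inj_on (\<lambda>k. \<phi> (h [^] k) t) {..card R}"
  proof
    assume "inj_on (\<lambda>k. \<phi> (h [^] k) t) {..card R}"
    then have "card {..card R} \<le> card R" using card_inj_on_le[OF _ _ fR] orbit_in_R by blast
    then show False by simp
  qed
  then obtain i j :: nat where ij: "i < j" "\<phi> (h [^] i) t = \<phi> (h [^] j) t"
    unfolding inj_on_def by (metis linorder_neqE_nat)
  have "\<phi> (h [^] i) (\<phi> (h [^] (j - i)) t) = \<phi> (h [^] i) t"
    using composition_rule[of t "h [^] i" "h [^] (j - i)"] t h ij by (simp add: nat_pow_mult)
  moreover have "\<phi> (h [^] (j - i)) t \<in> E" using element_image[of "h [^] (j - i)" t] t h by simp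
  ultimately have "\<phi> (h [^] (j - i)) t = t"
    using inj_prop[of "h [^] i"] h t by (simp add: inj_on_def)
  moreover have "1 \<le> j - i" using ij(1) by simp
  ultimately show ?thesis using that by blast
qed

lemma stabilizer_contains_conjugate_powers:
  assumes GA: "graph_action G E Ed \<phi>" and G: "connected_locfin_graph E Ed"
    and h: "h \<in> carrier G" and v: "v \<in> E" and hv: "\<phi> h v = v" and u: "u \<in> E"
  shows "contains_conjugate_powers G (stabilizer G \<phi> u) h"
  unfolding contains_conjugate_powers_def
proof
  interpret group G using group_hom group_hom.axioms(1) by auto
  fix g assume g: "g \<in> carrier G"
  define t where "t = \<phi> (inv g) u"
  have t: "t \<in> E" unfolding t_def using element_image[of "inv g" u] g u by simp
  obtain N :: nat where N: "1 \<le> N" "\<phi> (h [^] N) t = t" using pow_fixes_vertex[OF GA G h v hv t] .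
  have "\<phi> (g \<otimes> h [^] N \<otimes> inv g) u = \<phi> g (\<phi> (h [^] N) t)"
    unfolding t_def using composition_rule u g h element_image[of "inv g" u] by simp
  also have "\<dots> = u" unfolding t_def using N(2) orbit_sym_aux[OF inv_closed[OF g] u refl] g
    by (simp add: t_def)
  finally show "\<exists>N::nat. 1 \<le> N \<and> g \<otimes> h [^] N \<otimes> inv g \<in> stabilizer G \<phi> u"
    using N(1) g h unfolding stabilizer_def by auto
qed

lemma faithful_moves_point:
  assumes inj: "inj_on \<phi> (carrier G)" and w: "w \<in> carrier G" "w \<noteq> \<one>\<^bsub>G\<^esub>"
  obtains u where "u \<in> E" "\<phi> w u \<noteq> u"
proof (rule ccontr)
  interpret group G using group_hom group_hom.axioms(1) by auto
  assume "\<not> thesis"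
  then have "\<forall>u\<in>E. \<phi> w u = u" using that by blast
  moreover have "\<phi> w \<in> extensional E" using bij_prop0[OF w(1)] by (simp add: Bij_def)
  ultimately have "\<phi> w = \<phi> \<one>" unfolding id_eq_one[symmetric] by (auto simp: extensional_def)
  then show False using inj w by (meson inj_on_eq_iff one_closed)
qed

end

lemma group_hom_contains_conjugate_powers_vimage:
  assumes "group_hom G H \<psi>" and M: "contains_conjugate_powers H M (\<psi> h)" and h: "h \<in> carrier G"
  shows "contains_conjugate_powers G (carrier G \<inter> \<psi> -` M) h"
  unfolding contains_conjugate_powers_def
proof
  interpret group_hom G H \<psi> by fact
  fix g assume g: "g \<in> carrier G"
  obtain N :: nat where "1 \<le> N" "\<psi> g \<otimes>\<^bsub>H\<^esub> \<psi> h [^]\<^bsub>H\<^esub> N \<otimes>\<^bsub>H\<^esub> inv\<^bsub>H\<^esub> \<psi> g \<in> M"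
    using M hom_closed[OF g] unfolding contains_conjugate_powers_def by blast
  moreover have "\<psi> (g \<otimes>\<^bsub>G\<^esub> h [^]\<^bsub>G\<^esub> N \<otimes>\<^bsub>G\<^esub> inv\<^bsub>G\<^esub> g) = \<psi> g \<otimes>\<^bsub>H\<^esub> \<psi> h [^]\<^bsub>H\<^esub> N \<otimes>\<^bsub>H\<^esub> inv\<^bsub>H\<^esub> \<psi> g"
    using g h by (simp add: hom_nat_pow)
  moreover have "g \<otimes>\<^bsub>G\<^esub> h [^]\<^bsub>G\<^esub> N \<otimes>\<^bsub>G\<^esub> inv\<^bsub>G\<^esub> g \<in> carrier G" using g h by simp
  ultimately show "\<exists>N::nat. 1 \<le> N \<and> g \<otimes>\<^bsub>G\<^esub> h [^]\<^bsub>G\<^esub> N \<otimes>\<^bsub>G\<^esub> inv\<^bsub>G\<^esub> g \<in> carrier G \<inter> \<psi> -` M"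
    by auto
qed

lemma Thompson_F_meets_compact_open_subgroup_trivially:
  fixes H :: "('h, 'c) monoid_scheme"
  assumes TD: "tdlc_group H T" and hom: "\<psi> \<in> hom Thompson_F H" and inj: "inj_on \<psi> (carrier Thompson_F)"
    and K: "compact_open_subgroup K H T"
  shows "\<psi> ` carrier Thompson_F \<inter> K = {\<one>\<^bsub>H\<^esub>}"
proof -
  have TG: "topological_group H T" and HT: "Hausdorff_space T" "totally_disconnected_space T"
    using TD unfolding tdlc_group_iff by auto
  have K': "subgroup K H" "openin T K" "compactin T K" using K unfolding compact_open_subgroup_def by auto
  interpret H: group H using TG unfolding topological_group_def by blast
  interpret group_hom Thompson_F H \<psi>
    using group_Thompson_F hom by (simp add: group_hom_def group_hom_axioms_def H.is_group)
  have trivial: "h = \<one>\<^bsub>Thompson_F\<^esub>" if h: "h \<in> carrier Thompson_F" "\<psi> h \<in> K" for h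
  proof (rule ccontr)
    assume "h \<noteq> \<one>\<^bsub>Thompson_F\<^esub>"
    then obtain w where w: "w \<in> carrier Thompson_F" "w \<noteq> \<one>\<^bsub>Thompson_F\<^esub>"
      and trap: "\<And>M. subgroup M Thompson_F \<Longrightarrow> contains_conjugate_powers Thompson_F M h \<Longrightarrow> w \<in> M"
      using Thompson_F_conjugate_powers_trap[OF h(1)] by blast
    have "\<psi> w \<noteq> \<one>\<^bsub>H\<^esub>" using inj w by (metis G.one_closed hom_one inj_on_eq_iff)
    then obtain M where M: "subgroup M H" "openin T M" "\<psi> w \<notin> M"
      using H.open_subgroup_avoiding[OF TG HT K' hom_closed[OF w(1)]] by blast
    have "contains_conjugate_powers H M (\<psi> h)"
      using H.compact_subgroup_contains_conjugate_powers[OF TG K'(1,3) M(1,2) h(2)] .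
    then have "w \<in> carrier Thompson_F \<inter> \<psi> -` M"
      by (intro trap group_hom_subgroup_vimage[OF group_hom_axioms M(1)]
          group_hom_contains_conjugate_powers_vimage[OF group_hom_axioms _ h(1)])
    then show False using M(3) by blast
  qed
  show ?thesis
  proof (intro equalityI subsetI)
    fix z assume "z \<in> \<psi> ` carrier Thompson_F \<inter> K"
    then obtain h where "h \<in> carrier Thompson_F" "\<psi> h \<in> K" "z = \<psi> h" by blast
    then have "z = \<psi> \<one>\<^bsub>Thompson_F\<^esub>" using trivial by blast
    then show "z \<in> {\<one>\<^bsub>H\<^esub>}" using hom_one by (metis singletonI)
  next
    fix z assume "z \<in> {\<one>\<^bsub>H\<^esub>}"
    then show "z \<in> \<psi> ` carrier Thompson_F \<inter> K"
      using subgroup.one_closed[OF K'(1)] hom_one G.one_closed by (metis IntI image_eqI singletonD)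
  qed
qed

lemma Thompson_F_faithful_graph_action_free:
  assumes G: "connected_locfin_graph V Ed" and GA: "graph_action Thompson_F V Ed \<phi>"
    and inj: "inj_on \<phi> (carrier Thompson_F)"
    and h: "h \<in> carrier Thompson_F" and v: "v \<in> V" and hv: "\<phi> h v = v"
  shows "h = \<one>\<^bsub>Thompson_F\<^esub>"
proof (rule ccontr)
  interpret group_action Thompson_F V \<phi> using GA unfolding graph_action_def by blast
  assume "h \<noteq> \<one>\<^bsub>Thompson_F\<^esub>"
  then obtain w where w: "w \<in> carrier Thompson_F" "w \<noteq> \<one>\<^bsub>Thompson_F\<^esub>"
    and trap: "\<And>M. subgroup M Thompson_F \<Longrightarrow> contains_conjugate_powers Thompson_F M h \<Longrightarrow> w \<in> M"
    using Thompson_F_conjugate_powers_trap[OF h] by blast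
  obtain u where u: "u \<in> V" "\<phi> w u \<noteq> u" using faithful_moves_point[OF inj w] .
  have "w \<in> stabilizer Thompson_F \<phi> u"
    by (intro trap stabilizer_subgroup[OF u(1)] stabilizer_contains_conjugate_powers[OF GA G h v hv u(1)])
  then show False using u(2) unfolding stabilizer_def by simp
qed

theorem mainTheorem10:
  shows "(\<forall>(H :: 'h monoid) (T :: 'h topology) \<psi>.
            tdlc_group H T \<and> \<psi> \<in> hom Thompson_F H \<and> inj_on \<psi> (carrier Thompson_F) \<longrightarrow>
            (\<forall>K. compact_open_subgroup K H T \<longrightarrow> \<psi> ` carrier Thompson_F \<inter> K = {\<one>\<^bsub>H\<^esub>}))
       \<and> (\<forall>(V :: 'v set) Ed \<phi>.
            connected_locfin_graph V Ed \<and> graph_action Thompson_F V Ed \<phi> \<and>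
            inj_on \<phi> (carrier Thompson_F) \<longrightarrow>
            (\<forall>g\<in>carrier Thompson_F. \<forall>v\<in>V. \<phi> g v = v \<longrightarrow> g = \<one>\<^bsub>Thompson_F\<^esub>))"
proof (intro conjI allI impI ballI)
  fix H :: "'h monoid" and T \<psi> K
  assume "tdlc_group H T \<and> \<psi> \<in> hom Thompson_F H \<and> inj_on \<psi> (carrier Thompson_F)"
    and "compact_open_subgroup K H T"
  then show "\<psi> ` carrier Thompson_F \<inter> K = {\<one>\<^bsub>H\<^esub>}"
    by (elim conjE) (rule Thompson_F_meets_compact_open_subgroup_trivially)
next
  fix V :: "'v set" and Ed \<phi> g v
  assume "connected_locfin_graph V Ed \<and> graph_action Thompson_F V Ed \<phi> \<and> inj_on \<phi> (carrier Thompson_F)"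
    and "g \<in> carrier Thompson_F" "v \<in> V" "\<phi> g v = v"
  then show "g = \<one>\<^bsub>Thompson_F\<^esub>"
    by (elim conjE) (rule Thompson_F_faithful_graph_action_free)
qed

end
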